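(* If the based space $X$ is $\pi_1$-injective, then $\pi_1^{\tau}(X)$ is Hausdorff.
   Context: Let $X\to(X_\lambda,p_{\lambda\lambda'},\Lambda)$ be an expansion of $X$ in the homotopy category of based polyhedra (e.g. the Čech expansion): based polyhedra $X_\lambda$ indexed by a directed set $\Lambda$, based maps $p_\lambda:X\to X_\lambda$ and bonding maps $p_{\lambda\lambda'}:X_{\lambda'}\to X_\lambda$ with $p_\lambda\simeq p_{\lambda\lambda'}\circ p_{\lambda'}$ for $\lambda'\ge\lambda$. The first shape homotopy group $\check\pi_1(X)$ is the inverse limit of the discrete groups $\pi_1(X_\lambda)$ along the homomorphisms $(p_{\lambda\lambda'})_*$; it is a Hausdorff topological group. The maps $p_\lambda$ induce a homomorphism $\phi:\pi_1(X)\to\check\pi_1(X)$; $X$ is $\pi_1$-injective if $\phi$ is injective. $\pi_1^{qtop}(X)$ is $\pi_1(X)$ with the quotient topology from the based loop space $\Omega(X)$ (compact-open topology) via $\alpha\mapsto[\alpha]$. $F_M(S)$ is the free (Markov) topological group on a space $S$. For a group with topology $G$, $\tau(G)$ is $G$ with the quotient topology with respect to the multiplication epimorphism $m_G:F_M(G)\to G$ (generator $g\mapsto g$). $\pi_1^{\tau}=\tau\circ\pi_1^{qtop}$. *)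

theory Defs
  imports "HOL-Analysis.Analysis"
begin

text \<open>Loops are maps [0,1] -> X; to make them unique as HOL functions we
normalise them to be constantly the base point outside [0,1].\<close>

definition loops :: "'a topology \<Rightarrow> 'a \<Rightarrow> (real \<Rightarrow> 'a) set" where
  "loops X x0 = {g. pathin X g \<and> g 0 = x0 \<and> g 1 = x0 \<and> (\<forall>t. t \<notin> {0..1} \<longrightarrow> g t = x0)}"

definition loop_homotopic :: "'a topology \<Rightarrow> 'a \<Rightarrow> (real \<Rightarrow> 'a) \<Rightarrow> (real \<Rightarrow> 'a) \<Rightarrow> bool" where
  "loop_homotopic X x0 f g \<longleftrightarrow> f \<in> loops X x0 \<and> g \<in> loops X x0 \<and>
     homotopic_with (\<lambda>h. h 0 = x0 \<and> h 1 = x0) (top_of_set {0..1}) X f g"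

definition loop_concat :: "(real \<Rightarrow> 'a) \<Rightarrow> (real \<Rightarrow> 'a) \<Rightarrow> real \<Rightarrow> 'a" where
  "loop_concat f g = (\<lambda>t. if t \<le> 1/2 then f (2 * t) else g (2 * t - 1))"

definition loop_reverse :: "(real \<Rightarrow> 'a) \<Rightarrow> real \<Rightarrow> 'a" where
  "loop_reverse f = (\<lambda>t. f (1 - t))"

definition loop_class :: "'a topology \<Rightarrow> 'a \<Rightarrow> (real \<Rightarrow> 'a) \<Rightarrow> (real \<Rightarrow> 'a) set" where
  "loop_class X x0 f = {g. loop_homotopic X x0 f g}"

definition pi1_carrier :: "'a topology \<Rightarrow> 'a \<Rightarrow> (real \<Rightarrow> 'a) set set" where
  "pi1_carrier X x0 = loop_class X x0 ` loops X x0"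

definition pi1_mult :: "'a topology \<Rightarrow> 'a \<Rightarrow> (real \<Rightarrow> 'a) set \<Rightarrow> (real \<Rightarrow> 'a) set \<Rightarrow> (real \<Rightarrow> 'a) set" where
  "pi1_mult X x0 A B = loop_class X x0 (loop_concat (SOME f. f \<in> A) (SOME g. g \<in> B))"

definition pi1_inv :: "'a topology \<Rightarrow> 'a \<Rightarrow> (real \<Rightarrow> 'a) set \<Rightarrow> (real \<Rightarrow> 'a) set" where
  "pi1_inv X x0 A = loop_class X x0 (loop_reverse (SOME f. f \<in> A))"

definition pi1_one :: "'a topology \<Rightarrow> 'a \<Rightarrow> (real \<Rightarrow> 'a) set" where
  "pi1_one X x0 = loop_class X x0 (\<lambda>t. x0)"

text \<open>Based loop space Omega(X) with the compact-open topology (subbasis: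
{g. g ` K \<subseteq> W}, K compact in [0,1], W open in X).\<close>
definition loop_space :: "'a topology \<Rightarrow> 'a \<Rightarrow> (real \<Rightarrow> 'a) topology" where
  "loop_space X x0 = subtopology
     (topology_generated_by
        {{g \<in> loops X x0. g ` K \<subseteq> W} | K W. compact K \<and> K \<subseteq> {0..1} \<and> openin X W})
     (loops X x0)"

definition quotient_top :: "'b topology \<Rightarrow> ('b \<Rightarrow> 'c) \<Rightarrow> 'c set \<Rightarrow> 'c topology" where
  "quotient_top T q S = topology (\<lambda>U. U \<subseteq> S \<and> openin T {x \<in> topspace T. q x \<in> U})"

definition pi1_qtop :: "'a topology \<Rightarrow> 'a \<Rightarrow> (real \<Rightarrow> 'a) set topology" where
  "pi1_qtop X x0 = quotient_top (loop_space X x0) (loop_class X x0) (pi1_carrier X x0)"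

text \<open>Words: lists of letters (g, True) = g, (g, False) = g^-1.\<close>
fun push_letter :: "'g \<times> bool \<Rightarrow> ('g \<times> bool) list \<Rightarrow> ('g \<times> bool) list" where
  "push_letter x [] = [x]"
| "push_letter x (y # ys) = (if fst x = fst y \<and> snd x \<noteq> snd y then ys else x # y # ys)"

definition free_reduce :: "('g \<times> bool) list \<Rightarrow> ('g \<times> bool) list" where
  "free_reduce w = foldr push_letter w []"

definition free_group_carrier :: "'g set \<Rightarrow> ('g \<times> bool) list set" where
  "free_group_carrier S = {w. fst ` set w \<subseteq> S \<and> free_reduce w = w}"

definition free_mult :: "('g \<times> bool) list \<Rightarrow> ('g \<times> bool) list \<Rightarrow> ('g \<times> bool) list" where
  "free_mult v w = free_reduce (v @ w)"

definition free_inv :: "('g \<times> bool) list \<Rightarrow> ('g \<times> bool) list" where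
  "free_inv w = rev (map (\<lambda>(g, b). (g, \<not> b)) w)"

definition free_gen :: "'g \<Rightarrow> ('g \<times> bool) list" where
  "free_gen g = [(g, True)]"

definition group_topology :: "'b topology \<Rightarrow> 'b set \<Rightarrow> ('b \<Rightarrow> 'b \<Rightarrow> 'b) \<Rightarrow> ('b \<Rightarrow> 'b) \<Rightarrow> bool" where
  "group_topology T C mlt iv \<longleftrightarrow> topspace T = C \<and>
     continuous_map (prod_topology T T) T (\<lambda>(a, b). mlt a b) \<and>
     continuous_map T T iv"

text \<open>F_M(S): the free group on the points of S with the finest group topology
making the generator map S -> F(S) continuous (supremum of all such group topologies).\<close>
definition markov_top :: "'g topology \<Rightarrow> ('g \<times> bool) list topology" where
  "markov_top S = subtopology
     (topology_generated_by
        (\<Union> {{U. openin T U} | T. group_topology T (free_group_carrier (topspace S)) free_mult free_inv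
                                  \<and> continuous_map S T free_gen}))
     (free_group_carrier (topspace S))"

definition word_product :: "('g \<Rightarrow> 'g \<Rightarrow> 'g) \<Rightarrow> ('g \<Rightarrow> 'g) \<Rightarrow> 'g \<Rightarrow> ('g \<times> bool) list \<Rightarrow> 'g" where
  "word_product mlt iv one w = foldr (\<lambda>(g, b) acc. mlt (if b then g else iv g) acc) w one"

definition tau_top :: "'g topology \<Rightarrow> ('g \<Rightarrow> 'g \<Rightarrow> 'g) \<Rightarrow> ('g \<Rightarrow> 'g) \<Rightarrow> 'g \<Rightarrow> 'g topology" where
  "tau_top G mlt iv one = quotient_top (markov_top G) (word_product mlt iv one) (topspace G)"

definition pi1_tau :: "'a topology \<Rightarrow> 'a \<Rightarrow> (real \<Rightarrow> 'a) set topology" where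
  "pi1_tau X x0 = tau_top (pi1_qtop X x0) (pi1_mult X x0) (pi1_inv X x0) (pi1_one X x0)"

definition pointed_open_cover :: "'a topology \<Rightarrow> 'a \<Rightarrow> 'a set set \<Rightarrow> 'a set \<Rightarrow> bool" where
  "pointed_open_cover X x0 U U0 \<longleftrightarrow> (\<forall>V\<in>U. openin X V) \<and> \<Union>U = topspace X \<and>
     U0 \<in> U \<and> x0 \<in> U0 \<and> (\<forall>V\<in>U. V \<noteq> U0 \<longrightarrow> x0 \<notin> V)"

text \<open>Locally finite partition of unity subordinate to U (indexed by the members of U);
a cover admitting one is a normal (numerable) cover.\<close>
definition partition_of_unity :: "'a topology \<Rightarrow> 'a set set \<Rightarrow> ('a set \<Rightarrow> 'a \<Rightarrow> real) \<Rightarrow> bool" where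
  "partition_of_unity X U \<phi> \<longleftrightarrow>
     (\<forall>V\<in>U. continuous_map X euclideanreal (\<phi> V)) \<and>
     (\<forall>V. \<forall>x\<in>topspace X. 0 \<le> \<phi> V x) \<and>
     (\<forall>V. V \<notin> U \<longrightarrow> (\<forall>x\<in>topspace X. \<phi> V x = 0)) \<and>
     (\<forall>V\<in>U. X closure_of {x \<in> topspace X. \<phi> V x \<noteq> 0} \<subseteq> V) \<and>
     (\<forall>x\<in>topspace X. \<exists>W. openin X W \<and> x \<in> W \<and>
         finite {V\<in>U. \<exists>y\<in>W. \<phi> V y \<noteq> 0}) \<and>
     (\<forall>x\<in>topspace X. (\<Sum>V\<in>{V\<in>U. \<phi> V x \<noteq> 0}. \<phi> V x) = 1)"

definition fsupp :: "('v \<Rightarrow> real) \<Rightarrow> 'v set" where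
  "fsupp t = {v. t v \<noteq> 0}"

text \<open>Geometric realisation of the nerve N(U) (vertices: members of U; simplices:
finite subfamilies with nonempty intersection), as barycentric coordinate functions,
with the (metric) l1 topology.\<close>
definition nerve_points :: "'a set set \<Rightarrow> ('a set \<Rightarrow> real) set" where
  "nerve_points U = {t. (\<forall>V. 0 \<le> t V) \<and> finite (fsupp t) \<and> fsupp t \<subseteq> U \<and>
      \<Inter>(fsupp t) \<noteq> {} \<and> (\<Sum>V\<in>fsupp t. t V) = 1}"

definition l1_dist :: "('v \<Rightarrow> real) \<Rightarrow> ('v \<Rightarrow> real) \<Rightarrow> real" where
  "l1_dist s t = (\<Sum>V\<in>fsupp s \<union> fsupp t. \<bar>s V - t V\<bar>)"

definition nerve_top :: "'a set set \<Rightarrow> ('a set \<Rightarrow> real) topology" where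
  "nerve_top U = topology (\<lambda>W. W \<subseteq> nerve_points U \<and>
     (\<forall>t\<in>W. \<exists>e>0. \<forall>s\<in>nerve_points U. l1_dist t s < e \<longrightarrow> s \<in> W))"

definition nerve_vertex :: "'a set \<Rightarrow> ('a set \<Rightarrow> real)" where
  "nerve_vertex U0 = (\<lambda>V. if V = U0 then 1 else 0)"

definition canonical_map :: "('a set \<Rightarrow> 'a \<Rightarrow> real) \<Rightarrow> 'a \<Rightarrow> ('a set \<Rightarrow> real)" where
  "canonical_map \<phi> x = (\<lambda>V. \<phi> V x)"

text \<open>phi : pi_1(X) -> shape group injective, using the based Cech expansion:
two based loops with equal images in every pi_1(|N(U)|, U0) are homotopic.\<close>
definition pi1_injective :: "'a topology \<Rightarrow> 'a \<Rightarrow> bool" where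
  "pi1_injective X x0 \<longleftrightarrow>
     (\<forall>\<alpha>\<in>loops X x0. \<forall>\<beta>\<in>loops X x0.
        (\<forall>U U0 \<phi>. pointed_open_cover X x0 U U0 \<and> partition_of_unity X U \<phi> \<longrightarrow>
            loop_homotopic (nerve_top U) (nerve_vertex U0)
               (canonical_map \<phi> \<circ> \<alpha>) (canonical_map \<phi> \<circ> \<beta>))
        \<longrightarrow> loop_homotopic X x0 \<alpha> \<beta>)"

end

theory Submission
  imports Defs
begin

text \<open>Let A and B be distinct elements of \<pi>_1(X). By \<pi>_1-injectivity there is a numerable pointed
  cover U whose canonical map p into the nerve |N(U)| sends representatives of A and B to
  non-homotopic loops. The map C \<mapsto> [p \<circ> rep C] is constant on a compact-open neighbourhood of every
  loop (nearby loops pass through the same chain of members of U, so their images are all homotopic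
  to one piecewise linear loop), i.e. it is continuous into a discrete space. Reading words over
  \<pi>_1(X) as concatenated loops makes the induced map on the free group a homomorphism, so pulling
  back the discrete topology gives a group topology on the free group for which the generators are
  continuous; it is therefore coarser than the Markov topology. Hence the fibres of the map are open
  in \<tau>(\<pi>_1(X)), and two of them separate A and B.\<close>

lemma loopsD:
  assumes "f \<in> loops X x0"
  shows "pathin X f" "f 0 = x0" "f 1 = x0" "\<And>t. t \<notin> {0..1} \<Longrightarrow> f t = x0"
  using assms by (auto simp: loops_def)

lemma loops_in_topspace: "f \<in> loops X x0 \<Longrightarrow> t \<in> {0..1} \<Longrightarrow> f t \<in> topspace X"
  using loopsD(1)[of f X x0] unfolding pathin_def continuous_map_def by auto

lemma loops_base_in_topspace: "f \<in> loops X x0 \<Longrightarrow> x0 \<in> topspace X"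
  using loops_in_topspace[of f X x0 0] loopsD(2)[of f X x0] by simp

lemma const_in_loops: "x0 \<in> topspace X \<Longrightarrow> (\<lambda>t. x0) \<in> loops X x0"
  by (simp add: loops_def)

lemma continuous_map_path_reparam:
  assumes "pathin Y \<gamma>" "continuous_on D r" "\<And>z. z \<in> D \<Longrightarrow> r z \<in> {0..1::real}"
  shows "continuous_map (top_of_set D) Y (\<lambda>z. \<gamma> (r z))"
proof -
  have "continuous_map (top_of_set D) (top_of_set {0..1}) r" using assms(2,3) by auto
  from continuous_map_compose[OF this assms(1)[unfolded pathin_def]] show ?thesis
    by (simp add: o_def)
qed

lemma continuous_map_square_reparam:
  assumes "continuous_map (top_of_set ({0..1::real} \<times> {0..1::real})) Y k" "continuous_on D r"
    "\<And>z. z \<in> D \<Longrightarrow> r z \<in> {0..1::real} \<times> {0..1::real}"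
  shows "continuous_map (top_of_set D) Y (\<lambda>z. k (r z))"
proof -
  have "continuous_map (top_of_set D) (top_of_set ({0..1::real} \<times> {0..1::real})) r"
    using assms(2,3) by auto
  from continuous_map_compose[OF this assms(1)] show ?thesis
    by (simp add: o_def)
qed

lemma continuous_map_top_of_set_cases_le:
  fixes p :: "'b::topological_space \<Rightarrow> real"
  assumes "continuous_on D p" "continuous_map (top_of_set {z \<in> D. p z \<le> c}) Y f"
    "continuous_map (top_of_set {z \<in> D. c \<le> p z}) Y g" "\<And>z. z \<in> D \<Longrightarrow> p z = c \<Longrightarrow> f z = g z"
  shows "continuous_map (top_of_set D) Y (\<lambda>z. if p z \<le> c then f z else g z)"
proof (rule continuous_map_cases_le)
  show "continuous_map (top_of_set D) euclideanreal p" using assms(1) by simp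
  show "continuous_map (top_of_set D) euclideanreal (\<lambda>x. c)" by simp
  have "D \<inter> {x. x \<in> D \<and> p x \<le> c} = {z \<in> D. p z \<le> c}" by auto
  then show "continuous_map (subtopology (top_of_set D) {x. x \<in> topspace (top_of_set D) \<and> p x \<le> c}) Y f"
    using assms(2) by (simp add: subtopology_subtopology)
  have "D \<inter> {x. x \<in> D \<and> c \<le> p x} = {z \<in> D. c \<le> p z}" by auto
  then show "continuous_map (subtopology (top_of_set D) {x. x \<in> topspace (top_of_set D) \<and> c \<le> p x}) Y g"
    using assms(3) by (simp add: subtopology_subtopology)
qed (use assms(4) in simp)

lemma loop_concat_in_loops:
  assumes f: "f \<in> loops Y y0" and g: "g \<in> loops Y y0"
  shows "loop_concat f g \<in> loops Y y0"
proof -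
  have "pathin Y (\<lambda>t. if t \<le> 1/2 then f (2*t) else g (2*t - 1))"
    unfolding pathin_def
  proof (rule continuous_map_top_of_set_cases_le)
    show "continuous_map (top_of_set {z \<in> {0..1}. z \<le> 1/2}) Y (\<lambda>t. f (2 * t))"
      by (rule continuous_map_path_reparam[OF loopsD(1)[OF f]]) (auto intro!: continuous_intros)
    show "continuous_map (top_of_set {z \<in> {0..1}. 1/2 \<le> z}) Y (\<lambda>t. g (2 * t - 1))"
      by (rule continuous_map_path_reparam[OF loopsD(1)[OF g]]) (auto intro!: continuous_intros)
    show "f (2 * z) = g (2 * z - 1)" if "z = 1/2" for z
    proof -
      have "2 * z = 1" "2 * z - 1 = 0" using that by simp_all
      then show ?thesis using loopsD[OF f] loopsD[OF g] by simp
    qed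
  qed (intro continuous_intros)
  moreover have "loop_concat f g t = y0" if "t \<notin> {0..1}" for t
    using that loopsD(4)[OF f, of "2*t"] loopsD(4)[OF g, of "2*t-1"] by (auto simp: loop_concat_def)
  ultimately show ?thesis
    using loopsD[OF f] loopsD[OF g] unfolding loops_def loop_concat_def by auto
qed

lemma loop_reverse_in_loops:
  assumes f: "f \<in> loops Y y0"
  shows "loop_reverse f \<in> loops Y y0"
proof -
  have "pathin Y (\<lambda>t. f (1 - t))"
    unfolding pathin_def
    by (rule continuous_map_path_reparam[OF loopsD(1)[OF f]]) (auto intro!: continuous_intros)
  moreover have "loop_reverse f t = y0" if "t \<notin> {0..1}" for t
    using that loopsD(4)[OF f, of "1-t"] by (auto simp: loop_reverse_def)
  ultimately show ?thesis
    using loopsD[OF f] unfolding loops_def loop_reverse_def by auto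
qed

lemma loop_reverse_reverse [simp]: "loop_reverse (loop_reverse f) = f"
  by (simp add: loop_reverse_def)

lemma loop_reverse_concat:
  assumes "f 1 = g 0"
  shows "loop_reverse (loop_concat f g) = loop_concat (loop_reverse g) (loop_reverse f)"
proof
  fix t :: real
  consider "t < 1/2" | "t = 1/2" | "t > 1/2" by linarith
  then show "loop_reverse (loop_concat f g) t = loop_concat (loop_reverse g) (loop_reverse f) t"
  proof cases
    case 1
    have "2 * (1 - t) - 1 = 1 - 2 * t" by simp
    with 1 show ?thesis by (simp add: loop_concat_def loop_reverse_def)
  next
    case 2
    show ?thesis using assms unfolding 2 by (simp add: loop_concat_def loop_reverse_def)
  next
    case 3
    have "1 - (2 * t - 1) = 2 * (1 - t)" by simp
    with 3 show ?thesis by (simp add: loop_concat_def loop_reverse_def)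
  qed
qed

lemma comp_loop_concat: "p \<circ> loop_concat f g = loop_concat (p \<circ> f) (p \<circ> g)"
  by (auto simp: loop_concat_def fun_eq_iff)

lemma comp_loop_reverse: "p \<circ> loop_reverse f = loop_reverse (p \<circ> f)"
  by (auto simp: loop_reverse_def fun_eq_iff)

lemma comp_in_loops:
  assumes "continuous_map Y Z p" "p y0 = z0" "f \<in> loops Y y0"
  shows "p \<circ> f \<in> loops Z z0"
  using assms pathin_compose[of Y f Z p] unfolding loops_def by auto

lemma loop_homotopicI:
  assumes f: "f \<in> loops Y y0" and g: "g \<in> loops Y y0"
    and h: "continuous_map (top_of_set ({0..1::real} \<times> {0..1::real})) Y h"
    and h0: "\<And>t. t \<in> {0..1} \<Longrightarrow> h (0, t) = f t"
    and h1: "\<And>t. t \<in> {0..1} \<Longrightarrow> h (1, t) = g t"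
    and hb: "\<And>s. s \<in> {0..1} \<Longrightarrow> h (s, 0) = y0 \<and> h (s, 1) = y0"
  shows "loop_homotopic Y y0 f g"
  unfolding loop_homotopic_def
proof (intro conjI f g)
  show "homotopic_with (\<lambda>h. h 0 = y0 \<and> h 1 = y0) (top_of_set {0..1}) Y f g"
  proof (subst homotopic_with)
    show "\<exists>k. continuous_map (prod_topology (top_of_set {0..1::real}) (top_of_set {0..1})) Y k \<and>
        (\<forall>x\<in>topspace (top_of_set {0..1}). k (0, x) = f x) \<and>
        (\<forall>x\<in>topspace (top_of_set {0..1}). k (1, x) = g x) \<and>
        (\<forall>t\<in>{0..1}. k (t, 0) = y0 \<and> k (t, 1) = y0)"
      using h h0 h1 hb by (intro exI[where x=h]) (simp add: prod_topology_subtopology_eu)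
  qed simp
qed

lemma loop_homotopicE:
  assumes "loop_homotopic Y y0 f g"
  obtains k where "continuous_map (top_of_set ({0..1::real} \<times> {0..1::real})) Y k"
    "\<And>x. k (0, x) = f x" "\<And>x. k (1, x) = g x" "\<And>s. s \<in> {0..1} \<Longrightarrow> k (s, 0) = y0 \<and> k (s, 1) = y0"
  using assms unfolding loop_homotopic_def homotopic_with_def
  by (auto simp: prod_topology_subtopology_eu)

lemma loop_homotopic_imp_loops: "loop_homotopic Y y0 f g \<Longrightarrow> f \<in> loops Y y0 \<and> g \<in> loops Y y0"
  by (simp add: loop_homotopic_def)

lemma loop_homotopic_refl: "f \<in> loops Y y0 \<Longrightarrow> loop_homotopic Y y0 f f"
  unfolding loop_homotopic_def using loopsD[of f Y y0] by (simp add: pathin_def)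

lemma loop_homotopic_sym: "loop_homotopic Y y0 f g \<Longrightarrow> loop_homotopic Y y0 g f"
  unfolding loop_homotopic_def using homotopic_with_sym by blast

lemma loop_homotopic_trans [trans]:
  "loop_homotopic Y y0 f g \<Longrightarrow> loop_homotopic Y y0 g h \<Longrightarrow> loop_homotopic Y y0 f h"
  unfolding loop_homotopic_def using homotopic_with_trans by blast

lemma loop_homotopic_comp:
  assumes "continuous_map Y Z p" "p y0 = z0" "loop_homotopic Y y0 f g"
  shows "loop_homotopic Z z0 (p \<circ> f) (p \<circ> g)"
proof -
  have "homotopic_with (\<lambda>h. h 0 = y0 \<and> h 1 = y0) (top_of_set {0..1}) Y f g"
    using assms(3) by (simp add: loop_homotopic_def)
  then have "homotopic_with (\<lambda>h. h 0 = z0 \<and> h 1 = z0) (top_of_set {0..1}) Z (p \<circ> f) (p \<circ> g)"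
    by (rule homotopic_with_compose_continuous_map_left[OF _ assms(1)]) (use assms(2) in auto)
  moreover have "p \<circ> f \<in> loops Z z0" "p \<circ> g \<in> loops Z z0"
    using comp_in_loops[OF assms(1,2)] loop_homotopic_imp_loops[OF assms(3)] by auto
  ultimately show ?thesis
    unfolding loop_homotopic_def by blast
qed

text \<open>Proved by the straight-line homotopy between the two parameter maps.\<close>

lemma loop_homotopic_reparam:
  assumes \<gamma>: "\<gamma> \<in> loops Y y0" and f: "f \<in> loops Y y0" and g: "g \<in> loops Y y0"
    and ra: "continuous_on {0..1} ra" and rb: "continuous_on {0..1} rb"
    and ra01: "\<And>t. t \<in> {0..1} \<Longrightarrow> ra t \<in> {0..1::real}"
    and rb01: "\<And>t. t \<in> {0..1} \<Longrightarrow> rb t \<in> {0..1::real}"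
    and e0: "ra 0 = rb 0" "ra 0 \<in> {0,1}" and e1: "ra 1 = rb 1" "ra 1 \<in> {0,1}"
    and fa: "\<And>t. t \<in> {0..1} \<Longrightarrow> f t = \<gamma> (ra t)"
    and gb: "\<And>t. t \<in> {0..1} \<Longrightarrow> g t = \<gamma> (rb t)"
  shows "loop_homotopic Y y0 f g"
proof (rule loop_homotopicI[OF f g])
  let ?r = "\<lambda>z::real \<times> real. (1 - fst z) * ra (snd z) + fst z * rb (snd z)"
  have "continuous_on ({0..1} \<times> {0..1}) ?r"
    by (intro continuous_intros continuous_on_compose2[OF ra continuous_on_snd]
        continuous_on_compose2[OF rb continuous_on_snd]) auto
  moreover have "?r z \<in> {0..1}" if "z \<in> {0..1} \<times> {0..1}" for z
    using that ra01[of "snd z"] rb01[of "snd z"] convexD_alt[of "{0..1::real}" "ra (snd z)" "rb (snd z)" "fst z"]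
    by (auto simp: algebra_simps)
  ultimately show "continuous_map (top_of_set ({0..1} \<times> {0..1})) Y (\<lambda>z. \<gamma> (?r z))"
    by (rule continuous_map_path_reparam[OF loopsD(1)[OF \<gamma>]])
  show "\<gamma> (?r (0, t)) = f t" "\<gamma> (?r (1, t)) = g t" if "t \<in> {0..1}" for t
    using fa[OF that] gb[OF that] by simp_all
  show "\<gamma> (?r (s, 0)) = y0 \<and> \<gamma> (?r (s, 1)) = y0" for s
  proof -
    have "?r (s, 0) = ra 0" "?r (s, 1) = ra 1" using e0 e1 by (simp_all add: algebra_simps)
    then show ?thesis using e0 e1 loopsD[OF \<gamma>] by auto
  qed
qed

lemma loop_homotopic_concat:
  assumes F: "loop_homotopic Y y0 f f'" and G: "loop_homotopic Y y0 g g'"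
  shows "loop_homotopic Y y0 (loop_concat f g) (loop_concat f' g')"
proof -
  obtain k1 where k1: "continuous_map (top_of_set ({0..1::real} \<times> {0..1::real})) Y k1"
    "\<And>x. k1 (0, x) = f x" "\<And>x. k1 (1, x) = f' x" "\<And>s. s \<in> {0..1} \<Longrightarrow> k1 (s, 0) = y0 \<and> k1 (s, 1) = y0"
    using loop_homotopicE[OF F] by blast
  obtain k2 where k2: "continuous_map (top_of_set ({0..1::real} \<times> {0..1::real})) Y k2"
    "\<And>x. k2 (0, x) = g x" "\<And>x. k2 (1, x) = g' x" "\<And>s. s \<in> {0..1} \<Longrightarrow> k2 (s, 0) = y0 \<and> k2 (s, 1) = y0"
    using loop_homotopicE[OF G] by blast
  have L: "f \<in> loops Y y0" "f' \<in> loops Y y0" "g \<in> loops Y y0" "g' \<in> loops Y y0"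
    using loop_homotopic_imp_loops[OF F] loop_homotopic_imp_loops[OF G] by auto
  let ?H = "\<lambda>z::real \<times> real. if snd z \<le> 1/2 then k1 (fst z, 2 * snd z) else k2 (fst z, 2 * snd z - 1)"
  show ?thesis
  proof (rule loop_homotopicI[OF loop_concat_in_loops[OF L(1,3)] loop_concat_in_loops[OF L(2,4)]])
    show "continuous_map (top_of_set ({0..1} \<times> {0..1})) Y ?H"
    proof (rule continuous_map_top_of_set_cases_le)
      show "continuous_map (top_of_set {z \<in> {0..1} \<times> {0..1}. snd z \<le> 1/2}) Y (\<lambda>z::real \<times> real. k1 (fst z, 2 * snd z))"
        by (rule continuous_map_square_reparam[OF k1(1)]) (auto intro!: continuous_intros)
      show "continuous_map (top_of_set {z \<in> {0..1} \<times> {0..1}. 1/2 \<le> snd z}) Y (\<lambda>z::real \<times> real. k2 (fst z, 2 * snd z - 1))"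
        by (rule continuous_map_square_reparam[OF k2(1)]) (auto intro!: continuous_intros)
      show "k1 (fst z, 2 * snd z) = k2 (fst z, 2 * snd z - 1)" if "z \<in> {0..1} \<times> {0..1}" "snd z = 1/2" for z
      proof -
        obtain a b where z: "z = (a, b)" by (cases z)
        have "2 * b = 1" "2 * b - 1 = 0" "a \<in> {0..1}" using that z by auto
        then show ?thesis using k1(4)[of a] k2(4)[of a] z by simp
      qed
    qed (intro continuous_intros)
    show "?H (0, t) = loop_concat f g t" "?H (1, t) = loop_concat f' g' t" for t
      by (simp_all add: loop_concat_def k1 k2)
    show "?H (s, 0) = y0 \<and> ?H (s, 1) = y0" if "s \<in> {0..1}" for s
      using k1(4)[OF that] k2(4)[OF that] by simp
  qed
qed

lemma loop_homotopic_reverse: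
  assumes F: "loop_homotopic Y y0 f g"
  shows "loop_homotopic Y y0 (loop_reverse f) (loop_reverse g)"
proof -
  obtain k where k: "continuous_map (top_of_set ({0..1::real} \<times> {0..1::real})) Y k"
    "\<And>x. k (0, x) = f x" "\<And>x. k (1, x) = g x" "\<And>s. s \<in> {0..1} \<Longrightarrow> k (s, 0) = y0 \<and> k (s, 1) = y0"
    using loop_homotopicE[OF F] by blast
  have L: "f \<in> loops Y y0" "g \<in> loops Y y0" using loop_homotopic_imp_loops[OF F] by auto
  show ?thesis
  proof (rule loop_homotopicI[OF loop_reverse_in_loops[OF L(1)] loop_reverse_in_loops[OF L(2)]])
    show "continuous_map (top_of_set ({0..1} \<times> {0..1})) Y (\<lambda>z::real \<times> real. k (fst z, 1 - snd z))"
      by (rule continuous_map_square_reparam[OF k(1)]) (auto intro!: continuous_intros)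
  qed (use k in \<open>auto simp: loop_reverse_def\<close>)
qed

lemma loop_concat_const_left:
  assumes f: "f \<in> loops Y y0"
  shows "loop_homotopic Y y0 (loop_concat (\<lambda>t. y0) f) f"
proof (rule loop_homotopic_reparam[OF f _ f, where ra="\<lambda>t. max 0 (2*t - 1)" and rb="\<lambda>t. t"])
  show "loop_concat (\<lambda>t. y0) f \<in> loops Y y0"
    by (rule loop_concat_in_loops[OF const_in_loops[OF loops_base_in_topspace[OF f]] f])
  show "loop_concat (\<lambda>t. y0) f t = f (max 0 (2 * t - 1))" for t
  proof (cases "t \<le> 1/2")
    case True
    then have "max 0 (2 * t - 1) = 0" by simp
    then show ?thesis using True loopsD[OF f] by (simp add: loop_concat_def)
  qed (simp add: loop_concat_def)
qed (auto intro!: continuous_intros)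

lemma loop_concat_const_right:
  assumes f: "f \<in> loops Y y0"
  shows "loop_homotopic Y y0 (loop_concat f (\<lambda>t. y0)) f"
proof (rule loop_homotopic_reparam[OF f _ f, where ra="\<lambda>t. min 1 (2*t)" and rb="\<lambda>t. t"])
  show "loop_concat f (\<lambda>t. y0) \<in> loops Y y0"
    by (rule loop_concat_in_loops[OF f const_in_loops[OF loops_base_in_topspace[OF f]]])
  show "loop_concat f (\<lambda>t. y0) t = f (min 1 (2 * t))" for t
  proof (cases "t \<le> 1/2")
    case False
    then have "min 1 (2 * t) = 1" by simp
    then show ?thesis using False loopsD[OF f] by (simp add: loop_concat_def)
  qed (simp add: loop_concat_def)
qed (auto intro!: continuous_intros)

lemma loop_concat_assoc:
  assumes f: "f \<in> loops Y y0" and g: "g \<in> loops Y y0" and h: "h \<in> loops Y y0"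
  shows "loop_homotopic Y y0 (loop_concat (loop_concat f g) h) (loop_concat f (loop_concat g h))"
proof (rule loop_homotopic_reparam[where \<gamma>="loop_concat f (loop_concat g h)"
      and ra="\<lambda>t. min (2*t) (min (t + 1/4) ((t+1)/2))" and rb="\<lambda>t. t"])
  show "loop_concat (loop_concat f g) h t
      = loop_concat f (loop_concat g h) (min (2 * t) (min (t + 1/4) ((t + 1) / 2)))" for t
  proof -
    consider "t \<le> 1/4" | "1/4 < t" "t \<le> 1/2" | "1/2 < t" by linarith
    then show ?thesis
    proof cases
      case 2
      have "2 * (2 * (t + 1/4) - 1) = 2 * (2 * t) - 1" by (simp add: algebra_simps)
      with 2 show ?thesis by (simp add: loop_concat_def min_def)
    next
      case 3
      have "2 * ((t + 1) / 2) - 1 = t" by (simp add: algebra_simps)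
      with 3 show ?thesis by (simp add: loop_concat_def min_def)
    qed (simp add: loop_concat_def min_def)
  qed
qed (auto intro!: loop_concat_in_loops f g h continuous_intros simp: min_le_iff_disj)

lemma loop_concat_reverse_right:
  assumes f: "f \<in> loops Y y0"
  shows "loop_homotopic Y y0 (loop_concat f (loop_reverse f)) (\<lambda>t. y0)"
proof (rule loop_homotopic_reparam[OF f, where ra="\<lambda>t. min (2*t) (2 - 2*t)" and rb="\<lambda>t. 0"])
  show "(\<lambda>t. y0) \<in> loops Y y0" by (rule const_in_loops[OF loops_base_in_topspace[OF f]])
  show "loop_concat f (loop_reverse f) \<in> loops Y y0"
    by (intro loop_concat_in_loops loop_reverse_in_loops f)
  show "loop_concat f (loop_reverse f) t = f (min (2 * t) (2 - 2 * t))" for t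
  proof -
    have "1 - (2 * t - 1) = 2 - 2 * t" by simp
    then show ?thesis by (simp add: loop_concat_def loop_reverse_def min_def)
  qed
  show "y0 = f 0" using loopsD[OF f] by simp
qed (auto intro!: continuous_intros)

lemma loop_concat_cancel_left:
  assumes f: "f \<in> loops Y y0" and g: "g \<in> loops Y y0"
  shows "loop_homotopic Y y0 (loop_concat (loop_reverse f) (loop_concat f g)) g"
proof -
  have rf: "loop_reverse f \<in> loops Y y0" by (rule loop_reverse_in_loops[OF f])
  have "loop_homotopic Y y0 (loop_concat (loop_reverse f) (loop_concat f g))
          (loop_concat (loop_concat (loop_reverse f) f) g)"
    by (rule loop_homotopic_sym[OF loop_concat_assoc[OF rf f g]])
  also have "loop_homotopic Y y0 \<dots> (loop_concat (\<lambda>t. y0) g)"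
    using loop_homotopic_concat[OF loop_concat_reverse_right[OF rf] loop_homotopic_refl[OF g]] by simp
  also have "loop_homotopic Y y0 \<dots> g"
    by (rule loop_concat_const_left[OF g])
  finally show ?thesis .
qed

lemma loop_class_eq:
  assumes "loop_homotopic Y y0 f g"
  shows "loop_class Y y0 f = loop_class Y y0 g"
  using loop_homotopic_trans[OF loop_homotopic_sym[OF assms]] loop_homotopic_trans[OF assms]
  unfolding loop_class_def by blast

lemma loop_class_self: "f \<in> loops Y y0 \<Longrightarrow> f \<in> loop_class Y y0 f"
  unfolding loop_class_def by (simp add: loop_homotopic_refl)

lemma loop_class_eqD:
  assumes "f \<in> loops Y y0" "loop_class Y y0 f = loop_class Y y0 g"
  shows "loop_homotopic Y y0 f g"
  using loop_class_self[OF assms(1)] assms(2) unfolding loop_class_def by (simp add: loop_homotopic_sym)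

lemma loop_homotopic_some_class:
  assumes "f \<in> loops Y y0"
  shows "loop_homotopic Y y0 (SOME h. h \<in> loop_class Y y0 f) f"
  using someI[of "\<lambda>h. h \<in> loop_class Y y0 f", OF loop_class_self[OF assms]]
  unfolding loop_class_def by (simp add: loop_homotopic_sym)


definition cancels :: "'g \<times> bool \<Rightarrow> 'g \<times> bool \<Rightarrow> bool" where
  "cancels a b \<longleftrightarrow> fst a = fst b \<and> snd a \<noteq> snd b"

fun reduced :: "('g \<times> bool) list \<Rightarrow> bool" where
  "reduced [] = True"
| "reduced [a] = True"
| "reduced (a # b # w) = (\<not> cancels a b \<and> reduced (b # w))"

definition flip_letter :: "'g \<times> bool \<Rightarrow> 'g \<times> bool" where
  "flip_letter a = (fst a, \<not> snd a)"

lemma reduced_tl: "reduced (b # w) \<Longrightarrow> reduced w"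
  by (cases w) auto

lemma push_letter_eq:
  "push_letter a w = (case w of [] \<Rightarrow> [a] | b # ws \<Rightarrow> if cancels a b then ws else a # b # ws)"
  by (cases w) (auto simp: cancels_def)

lemma reduced_push_letter: "reduced w \<Longrightarrow> reduced (push_letter a w)"
  by (cases w) (auto simp: push_letter_eq dest: reduced_tl)

lemma set_push_letter: "set (push_letter a w) \<subseteq> insert a (set w)"
  by (cases w) (auto simp: push_letter_eq)

lemma free_reduce_Nil [simp]: "free_reduce [] = []"
  by (simp add: free_reduce_def)

lemma free_reduce_Cons [simp]: "free_reduce (a # w) = push_letter a (free_reduce w)"
  by (simp add: free_reduce_def)

lemma reduced_free_reduce: "reduced (free_reduce w)"
  by (induction w) (auto intro: reduced_push_letter)

lemma free_reduce_reduced: "reduced w \<Longrightarrow> free_reduce w = w"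
proof (induction w)
  case (Cons a w)
  then have "free_reduce w = w" using reduced_tl by blast
  then show ?case using Cons.prems by (cases w) (auto simp: push_letter_eq)
qed simp

lemma set_free_reduce: "set (free_reduce w) \<subseteq> set w"
  by (induction w) (use set_push_letter in fastforce)+

lemma reduced_snoc: "reduced (xs @ [a]) \<longleftrightarrow> reduced xs \<and> (xs = [] \<or> \<not> cancels (last xs) a)"
  by (induction xs) (auto simp: neq_Nil_conv)

lemma free_inv_eq: "free_inv w = rev (map flip_letter w)"
  by (simp add: free_inv_def flip_letter_def case_prod_unfold)

lemma reduced_free_inv: "reduced v \<Longrightarrow> reduced (free_inv v)"
proof (induction v)
  case (Cons a v)
  have "v = [] \<or> \<not> cancels (last (free_inv v)) (flip_letter a)"
  proof (cases v)
    case (Cons b vs)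
    then have "\<not> cancels a b" using Cons.prems by simp
    then show ?thesis using Cons by (simp add: free_inv_eq last_rev cancels_def flip_letter_def)
  qed simp
  then show ?case using Cons.IH reduced_tl[OF Cons.prems] by (auto simp: free_inv_eq reduced_snoc)
qed (simp add: free_inv_def)

lemma free_mult_in_carrier:
  assumes "v \<in> free_group_carrier S" "w \<in> free_group_carrier S"
  shows "free_mult v w \<in> free_group_carrier S"
proof -
  have "fst ` set (free_reduce (v @ w)) \<subseteq> fst ` set (v @ w)" by (rule image_mono[OF set_free_reduce])
  also have "\<dots> \<subseteq> S" using assms unfolding free_group_carrier_def by auto
  finally show ?thesis using free_reduce_reduced[OF reduced_free_reduce[of "v @ w"]]
    unfolding free_group_carrier_def free_mult_def by auto
qed

lemma free_inv_in_carrier: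
  assumes "v \<in> free_group_carrier S"
  shows "free_inv v \<in> free_group_carrier S"
proof -
  have "reduced v" using assms reduced_free_reduce[of v] unfolding free_group_carrier_def by auto
  then have "reduced (free_inv v)" by (rule reduced_free_inv)
  then show ?thesis using assms unfolding free_group_carrier_def
    by (auto simp: free_inv_eq flip_letter_def free_reduce_reduced)
qed

lemma free_gen_in_carrier: "g \<in> S \<Longrightarrow> free_gen g \<in> free_group_carrier S"
  by (simp add: free_group_carrier_def free_gen_def)

subsection \<open>Loops spelled by words\<close>

definition class_rep :: "'b set \<Rightarrow> 'b" where
  "class_rep C = (SOME f. f \<in> C)"

definition letter_loop :: "(real \<Rightarrow> 'a) set \<times> bool \<Rightarrow> real \<Rightarrow> 'a" where
  "letter_loop a = (if snd a then class_rep (fst a) else loop_reverse (class_rep (fst a)))"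

fun word_loop :: "'a \<Rightarrow> ((real \<Rightarrow> 'a) set \<times> bool) list \<Rightarrow> real \<Rightarrow> 'a" where
  "word_loop x0 [] = (\<lambda>t. x0)"
| "word_loop x0 (a # w) = loop_concat (letter_loop a) (word_loop x0 w)"

lemma pi1_carrier_class_rep:
  assumes "C \<in> pi1_carrier X x0"
  shows "class_rep C \<in> loops X x0" "C = loop_class X x0 (class_rep C)"
proof -
  obtain \<alpha> where \<alpha>: "\<alpha> \<in> loops X x0" "C = loop_class X x0 \<alpha>"
    using assms unfolding pi1_carrier_def by auto
  have h: "loop_homotopic X x0 (class_rep C) \<alpha>"
    unfolding class_rep_def \<alpha>(2) by (rule loop_homotopic_some_class[OF \<alpha>(1)])
  then show "class_rep C \<in> loops X x0" using loop_homotopic_imp_loops by metis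
  show "C = loop_class X x0 (class_rep C)" using loop_class_eq[OF h] \<alpha>(2) by simp
qed

lemma letter_loop_in_loops: "fst a \<in> pi1_carrier X x0 \<Longrightarrow> letter_loop a \<in> loops X x0"
  using pi1_carrier_class_rep(1)[of "fst a" X x0] loop_reverse_in_loops by (auto simp: letter_loop_def)

lemma word_loop_in_loops:
  assumes "x0 \<in> topspace X" "fst ` set w \<subseteq> pi1_carrier X x0"
  shows "word_loop x0 w \<in> loops X x0"
  using assms(2)
  by (induction w) (auto intro!: loop_concat_in_loops letter_loop_in_loops const_in_loops assms(1))

lemma letter_loop_cancels: "cancels a b \<Longrightarrow> letter_loop a = loop_reverse (letter_loop b)"
  by (cases "snd b") (auto simp: cancels_def letter_loop_def)

lemma letter_loop_flip_letter: "letter_loop (flip_letter a) = loop_reverse (letter_loop a)"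
  by (cases "snd a") (auto simp: flip_letter_def letter_loop_def)

context
  fixes X :: "'a topology" and x0 :: 'a
  assumes x0: "x0 \<in> topspace X"
begin

lemma word_loop_push_letter:
  assumes "fst a \<in> pi1_carrier X x0" "fst ` set w \<subseteq> pi1_carrier X x0"
  shows "loop_homotopic X x0 (word_loop x0 (push_letter a w)) (loop_concat (letter_loop a) (word_loop x0 w))"
proof (cases w)
  case Nil
  then show ?thesis using word_loop_in_loops[OF x0, of "[a]"] assms by (simp add: loop_homotopic_refl)
next
  case (Cons b ws)
  have lb: "letter_loop b \<in> loops X x0" using assms Cons by (auto intro: letter_loop_in_loops)
  have lw: "word_loop x0 ws \<in> loops X x0" using assms Cons by (auto intro: word_loop_in_loops[OF x0])
  show ?thesis
  proof (cases "cancels a b")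
    case True
    then show ?thesis
      using Cons letter_loop_cancels[OF True] loop_concat_cancel_left[OF lb lw]
      by (simp add: push_letter_eq loop_homotopic_sym)
  next
    case False
    then show ?thesis
      using Cons word_loop_in_loops[OF x0, of "a # w"] assms by (simp add: push_letter_eq loop_homotopic_refl)
  qed
qed

lemma word_loop_free_reduce:
  assumes "fst ` set w \<subseteq> pi1_carrier X x0"
  shows "loop_homotopic X x0 (word_loop x0 (free_reduce w)) (word_loop x0 w)"
  using assms
proof (induction w)
  case Nil then show ?case using word_loop_in_loops[OF x0, of "[]"] by (simp add: loop_homotopic_refl)
next
  case (Cons a w)
  have "fst ` set (free_reduce w) \<subseteq> pi1_carrier X x0" using Cons.prems set_free_reduce[of w] by auto
  then have "loop_homotopic X x0 (word_loop x0 (free_reduce (a # w)))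
      (loop_concat (letter_loop a) (word_loop x0 (free_reduce w)))"
    using word_loop_push_letter Cons.prems by auto
  also have "loop_homotopic X x0 \<dots> (word_loop x0 (a # w))"
    using loop_homotopic_concat[OF loop_homotopic_refl[OF letter_loop_in_loops] Cons.IH] Cons.prems by auto
  finally show ?case .
qed

lemma word_loop_append:
  assumes "fst ` set v \<subseteq> pi1_carrier X x0" "fst ` set w \<subseteq> pi1_carrier X x0"
  shows "loop_homotopic X x0 (word_loop x0 (v @ w)) (loop_concat (word_loop x0 v) (word_loop x0 w))"
  using assms(1)
proof (induction v)
  case Nil
  then show ?case
    using loop_homotopic_sym[OF loop_concat_const_left[OF word_loop_in_loops[OF x0 assms(2)]]] by simp
next
  case (Cons a v)
  have la: "letter_loop a \<in> loops X x0" using Cons.prems by (auto intro: letter_loop_in_loops)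
  have lv: "word_loop x0 v \<in> loops X x0" using Cons.prems by (auto intro: word_loop_in_loops[OF x0])
  have lw: "word_loop x0 w \<in> loops X x0" by (rule word_loop_in_loops[OF x0 assms(2)])
  have "loop_homotopic X x0 (word_loop x0 ((a # v) @ w))
      (loop_concat (letter_loop a) (loop_concat (word_loop x0 v) (word_loop x0 w)))"
    using loop_homotopic_concat[OF loop_homotopic_refl[OF la] Cons.IH] Cons.prems by auto
  also have "loop_homotopic X x0 \<dots> (loop_concat (word_loop x0 (a # v)) (word_loop x0 w))"
    using loop_homotopic_sym[OF loop_concat_assoc[OF la lv lw]] by simp
  finally show ?case .
qed

lemma word_loop_free_inv:
  assumes "fst ` set w \<subseteq> pi1_carrier X x0"
  shows "loop_homotopic X x0 (word_loop x0 (free_inv w)) (loop_reverse (word_loop x0 w))"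
  using assms
proof (induction w)
  case Nil then show ?case using loop_homotopic_refl[OF const_in_loops[OF x0]]
    by (simp add: free_inv_def loop_reverse_def)
next
  case (Cons a w)
  have la: "letter_loop a \<in> loops X x0" using Cons.prems by (auto intro: letter_loop_in_loops)
  have lw: "word_loop x0 w \<in> loops X x0" using Cons.prems by (auto intro: word_loop_in_loops[OF x0])
  have inv_w: "fst ` set (free_inv w) \<subseteq> pi1_carrier X x0"
    using Cons.prems by (auto simp: free_inv_eq flip_letter_def)
  have flip_a: "fst ` set [flip_letter a] \<subseteq> pi1_carrier X x0"
    using Cons.prems by (auto simp: flip_letter_def)
  have "loop_homotopic X x0 (word_loop x0 (free_inv (a # w)))
      (loop_concat (word_loop x0 (free_inv w)) (word_loop x0 [flip_letter a]))"
    using word_loop_append[OF inv_w flip_a] by (simp add: free_inv_eq)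
  also have "loop_homotopic X x0 \<dots> (loop_concat (loop_reverse (word_loop x0 w)) (loop_reverse (letter_loop a)))"
    using loop_concat_const_right[OF loop_reverse_in_loops[OF la]] Cons
    by (intro loop_homotopic_concat) (auto simp: letter_loop_flip_letter)
  also have "\<dots> = loop_reverse (word_loop x0 (a # w))"
    using loopsD[OF la] loopsD[OF lw] by (simp add: loop_reverse_concat)
  finally show ?case .
qed

lemma word_product_pi1:
  assumes "fst ` set w \<subseteq> pi1_carrier X x0"
  shows "word_product (pi1_mult X x0) (pi1_inv X x0) (pi1_one X x0) w = loop_class X x0 (word_loop x0 w)"
  using assms
proof (induction w)
  case Nil then show ?case by (simp add: word_product_def pi1_one_def)
next
  case (Cons a w)
  have la: "letter_loop a \<in> loops X x0" using Cons.prems by (auto intro: letter_loop_in_loops)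
  have lw: "word_loop x0 w \<in> loops X x0" using Cons.prems by (auto intro: word_loop_in_loops[OF x0])
  define A where "A = (if snd a then fst a else pi1_inv X x0 (fst a))"
  have "word_product (pi1_mult X x0) (pi1_inv X x0) (pi1_one X x0) (a # w)
      = pi1_mult X x0 A (loop_class X x0 (word_loop x0 w))"
    using Cons by (simp add: word_product_def A_def case_prod_unfold)
  moreover have "loop_homotopic X x0 (SOME f. f \<in> A) (letter_loop a)"
  proof (cases "snd a")
    case True
    then show ?thesis using la by (simp add: A_def letter_loop_def class_rep_def loop_homotopic_refl)
  next
    case False
    then have "A = loop_class X x0 (letter_loop a)"
      by (simp add: A_def letter_loop_def pi1_inv_def class_rep_def)
    then show ?thesis using loop_homotopic_some_class[OF la] by simp
  qed
  ultimately show ?case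
    unfolding pi1_mult_def
    using loop_class_eq[OF loop_homotopic_concat[OF _ loop_homotopic_some_class[OF lw]]] by simp
qed

end

lemma openin_nerve_top:
  "openin (nerve_top U) W \<longleftrightarrow> W \<subseteq> nerve_points U \<and>
     (\<forall>t\<in>W. \<exists>e>0. \<forall>s\<in>nerve_points U. l1_dist t s < e \<longrightarrow> s \<in> W)"
proof -
  have "istopology (\<lambda>W. W \<subseteq> nerve_points U \<and>
     (\<forall>t\<in>W. \<exists>e>0. \<forall>s\<in>nerve_points U. l1_dist t s < e \<longrightarrow> s \<in> W))"
    unfolding istopology_def
  proof (rule conjI; intro allI impI)
    fix S T :: "('a set \<Rightarrow> real) set"
    assume S: "S \<subseteq> nerve_points U \<and> (\<forall>t\<in>S. \<exists>e>0. \<forall>s\<in>nerve_points U. l1_dist t s < e \<longrightarrow> s \<in> S)"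
      and T: "T \<subseteq> nerve_points U \<and> (\<forall>t\<in>T. \<exists>e>0. \<forall>s\<in>nerve_points U. l1_dist t s < e \<longrightarrow> s \<in> T)"
    show "S \<inter> T \<subseteq> nerve_points U \<and> (\<forall>t\<in>S \<inter> T. \<exists>e>0. \<forall>s\<in>nerve_points U. l1_dist t s < e \<longrightarrow> s \<in> S \<inter> T)"
    proof (intro conjI ballI)
      show "S \<inter> T \<subseteq> nerve_points U" using S by auto
      fix t assume "t \<in> S \<inter> T"
      then obtain e1 e2 where "e1 > 0" "\<forall>s\<in>nerve_points U. l1_dist t s < e1 \<longrightarrow> s \<in> S"
        "e2 > 0" "\<forall>s\<in>nerve_points U. l1_dist t s < e2 \<longrightarrow> s \<in> T"
        using S T by blast
      then show "\<exists>e>0. \<forall>s\<in>nerve_points U. l1_dist t s < e \<longrightarrow> s \<in> S \<inter> T"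
        by (intro exI[of _ "min e1 e2"]) auto
    qed
  next
    fix K :: "('a set \<Rightarrow> real) set set"
    assume K: "\<forall>S\<in>K. S \<subseteq> nerve_points U \<and> (\<forall>t\<in>S. \<exists>e>0. \<forall>s\<in>nerve_points U. l1_dist t s < e \<longrightarrow> s \<in> S)"
    show "\<Union>K \<subseteq> nerve_points U \<and> (\<forall>t\<in>\<Union>K. \<exists>e>0. \<forall>s\<in>nerve_points U. l1_dist t s < e \<longrightarrow> s \<in> \<Union>K)"
    proof (intro conjI ballI)
      show "\<Union>K \<subseteq> nerve_points U" using K by auto
      fix t assume "t \<in> \<Union>K"
      then obtain S where "S \<in> K" "t \<in> S" by auto
      then obtain e where "e > 0" "\<forall>s\<in>nerve_points U. l1_dist t s < e \<longrightarrow> s \<in> S" using K by blast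
      then show "\<exists>e>0. \<forall>s\<in>nerve_points U. l1_dist t s < e \<longrightarrow> s \<in> \<Union>K"
        using \<open>S \<in> K\<close> by blast
    qed
  qed
  then show ?thesis unfolding nerve_top_def by simp
qed

lemma topspace_nerve_top: "topspace (nerve_top U) = nerve_points U"
proof
  show "topspace (nerve_top U) \<subseteq> nerve_points U"
    unfolding topspace_def using openin_nerve_top by blast
  have "openin (nerve_top U) (nerve_points U)"
    unfolding openin_nerve_top by (auto intro: exI[of _ 1])
  then show "nerve_points U \<subseteq> topspace (nerve_top U)" by (rule openin_subset)
qed

definition l1_continuous :: "'b topology \<Rightarrow> 'a set set \<Rightarrow> ('b \<Rightarrow> 'a set \<Rightarrow> real) \<Rightarrow> bool" where
  "l1_continuous Z U f \<longleftrightarrow> (\<forall>z\<in>topspace Z. f z \<in> nerve_points U) \<and>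
     (\<forall>z\<in>topspace Z. \<forall>e>0. \<exists>Q. openin Z Q \<and> z \<in> Q \<and> (\<forall>z'\<in>Q. l1_dist (f z) (f z') < e))"

lemma continuous_map_l1_continuous:
  assumes "l1_continuous Z U f"
  shows "continuous_map Z (nerve_top U) f"
  unfolding continuous_map_def
proof (intro conjI allI impI)
  show "f \<in> topspace Z \<rightarrow> topspace (nerve_top U)"
    using assms by (auto simp: l1_continuous_def topspace_nerve_top)
  fix W assume W: "openin (nerve_top U) W"
  show "openin Z {x \<in> topspace Z. f x \<in> W}"
  proof (subst openin_subopen, intro ballI)
    fix z assume z: "z \<in> {x \<in> topspace Z. f x \<in> W}"
    then obtain e where e: "e > 0" "\<forall>s\<in>nerve_points U. l1_dist (f z) s < e \<longrightarrow> s \<in> W"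
      using W unfolding openin_nerve_top by blast
    obtain Q where Q: "openin Z Q" "z \<in> Q" "\<forall>z'\<in>Q. l1_dist (f z) (f z') < e"
      using assms e(1) z unfolding l1_continuous_def by blast
    have "Q \<subseteq> {x \<in> topspace Z. f x \<in> W}"
    proof
      fix z' assume "z' \<in> Q"
      then have "z' \<in> topspace Z" using openin_subset[OF Q(1)] by auto
      then show "z' \<in> {x \<in> topspace Z. f x \<in> W}"
        using e Q \<open>z' \<in> Q\<close> assms unfolding l1_continuous_def by auto
    qed
    then show "\<exists>T. openin Z T \<and> z \<in> T \<and> T \<subseteq> {x \<in> topspace Z. f x \<in> W}"
      using Q by blast
  qed
qed

lemma l1_continuous_compose:
  assumes f: "l1_continuous Y U f" and g: "continuous_map Z Y g"
  shows "l1_continuous Z U (\<lambda>z. f (g z))"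
  unfolding l1_continuous_def
proof (intro conjI ballI allI impI)
  fix z assume z: "z \<in> topspace Z"
  then have gz: "g z \<in> topspace Y" using g by (auto simp: continuous_map_def)
  then show "f (g z) \<in> nerve_points U" using f by (auto simp: l1_continuous_def)
  fix e :: real assume e: "e > 0"
  obtain Q where Q: "openin Y Q" "g z \<in> Q" "\<forall>y'\<in>Q. l1_dist (f (g z)) (f y') < e"
    using f gz e unfolding l1_continuous_def by blast
  show "\<exists>Q. openin Z Q \<and> z \<in> Q \<and> (\<forall>z'\<in>Q. l1_dist (f (g z)) (f (g z')) < e)"
    by (rule exI[of _ "{x \<in> topspace Z. g x \<in> Q}"])
      (use Q z openin_continuous_map_preimage[OF g Q(1)] in auto)
qed

lemma l1_dist_eq_sum_superset:
  assumes "finite A" "fsupp s \<union> fsupp t \<subseteq> A"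
  shows "l1_dist s t = (\<Sum>V\<in>A. \<bar>s V - t V\<bar>)"
  unfolding l1_dist_def
  by (rule sum.mono_neutral_left[OF assms]) (auto simp: fsupp_def)

lemma nerve_points_sum_superset:
  assumes "s \<in> nerve_points U" "finite A" "fsupp s \<subseteq> A"
  shows "(\<Sum>V\<in>A. s V) = 1"
proof -
  have "(\<Sum>V\<in>fsupp s. s V) = 1" using assms(1) by (simp add: nerve_points_def)
  moreover have "(\<Sum>V\<in>fsupp s. s V) = (\<Sum>V\<in>A. s V)"
    by (rule sum.mono_neutral_left[OF assms(2,3)]) (auto simp: fsupp_def)
  ultimately show ?thesis by simp
qed

lemma nerve_points_nonneg: "s \<in> nerve_points U \<Longrightarrow> 0 \<le> s V"
  by (simp add: nerve_points_def)

lemma nerve_points_finite_fsupp: "s \<in> nerve_points U \<Longrightarrow> finite (fsupp s)"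
  by (simp add: nerve_points_def)

definition interpolate :: "real \<Rightarrow> ('v \<Rightarrow> real) \<Rightarrow> ('v \<Rightarrow> real) \<Rightarrow> 'v \<Rightarrow> real" where
  "interpolate c a b = (\<lambda>V. (1 - c) * a V + c * b V)"

lemma interpolate_0 [simp]: "interpolate 0 a b = a"
  by (simp add: interpolate_def)

lemma interpolate_1 [simp]: "interpolate 1 a b = b"
  by (simp add: interpolate_def)

lemma interpolate_same [simp]: "interpolate c a a = a"
  by (auto simp: interpolate_def fun_eq_iff algebra_simps)

lemma abs_interpolate_diff_le:
  fixes c c' x y x' y' :: real
  assumes "c \<in> {0..1}" "c' \<in> {0..1}" "0 \<le> x'" "0 \<le> y'"
  shows "\<bar>((1 - c) * x + c * y) - ((1 - c') * x' + c' * y')\<bar> \<le> \<bar>x - x'\<bar> + \<bar>y - y'\<bar> + \<bar>c - c'\<bar> * (x' + y')"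
proof -
  have eq: "((1 - c) * x + c * y) - ((1 - c') * x' + c' * y') = (1 - c) * (x - x') + c * (y - y') + (c' - c) * (x' - y')"
    by (simp add: algebra_simps)
  have bound_x: "\<bar>(1 - c) * (x - x')\<bar> \<le> \<bar>x - x'\<bar>"
  proof -
    have "\<bar>(1 - c) * (x - x')\<bar> = (1 - c) * \<bar>x - x'\<bar>" using assms(1) by (simp add: abs_mult)
    also have "\<dots> \<le> \<bar>x - x'\<bar>" using assms(1) by (intro mult_left_le_one_le) auto
    finally show ?thesis .
  qed
  have bound_y: "\<bar>c * (y - y')\<bar> \<le> \<bar>y - y'\<bar>"
  proof -
    have "\<bar>c * (y - y')\<bar> = c * \<bar>y - y'\<bar>" using assms(1) by (simp add: abs_mult)
    also have "\<dots> \<le> \<bar>y - y'\<bar>" using assms(1) by (intro mult_left_le_one_le) auto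
    finally show ?thesis .
  qed
  have bound_c: "\<bar>(c' - c) * (x' - y')\<bar> \<le> \<bar>c - c'\<bar> * (x' + y')"
  proof -
    have "\<bar>(c' - c) * (x' - y')\<bar> = \<bar>c - c'\<bar> * \<bar>x' - y'\<bar>" by (simp add: abs_mult abs_minus_commute)
    also have "\<dots> \<le> \<bar>c - c'\<bar> * (x' + y')" using assms(3,4) by (intro mult_left_mono) auto
    finally show ?thesis .
  qed
  show ?thesis unfolding eq using bound_x bound_y bound_c abs_triangle_ineq[of "(1 - c) * (x - x') + c * (y - y')" "(c' - c) * (x' - y')"]
    abs_triangle_ineq[of "(1 - c) * (x - x')" "c * (y - y')"] by linarith
qed

lemma fsupp_interpolate: "fsupp (interpolate c a b) \<subseteq> fsupp a \<union> fsupp b"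
  by (auto simp: fsupp_def interpolate_def)

lemma l1_dist_interpolate_le:
  assumes a: "a \<in> nerve_points U" and a': "a' \<in> nerve_points U"
    and b: "b \<in> nerve_points U" and b': "b' \<in> nerve_points U"
    and c: "c \<in> {0..1}" and c': "c' \<in> {0..1}"
  shows "l1_dist (interpolate c a b) (interpolate c' a' b') \<le> 2 * \<bar>c - c'\<bar> + l1_dist a a' + l1_dist b b'"
proof -
  define A where "A = fsupp a \<union> fsupp a' \<union> fsupp b \<union> fsupp b'"
  have fA: "finite A" using a a' b b' by (simp add: A_def nerve_points_finite_fsupp)
  have e1: "l1_dist (interpolate c a b) (interpolate c' a' b') = (\<Sum>V\<in>A. \<bar>interpolate c a b V - interpolate c' a' b' V\<bar>)"
    by (rule l1_dist_eq_sum_superset[OF fA]) (use fsupp_interpolate[of c a b] fsupp_interpolate[of c' a' b'] in \<open>auto simp: A_def\<close>)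
  have e2: "l1_dist a a' = (\<Sum>V\<in>A. \<bar>a V - a' V\<bar>)" by (rule l1_dist_eq_sum_superset[OF fA]) (auto simp: A_def)
  have e3: "l1_dist b b' = (\<Sum>V\<in>A. \<bar>b V - b' V\<bar>)" by (rule l1_dist_eq_sum_superset[OF fA]) (auto simp: A_def)
  have s1: "(\<Sum>V\<in>A. a' V) = 1" by (rule nerve_points_sum_superset[OF a' fA]) (auto simp: A_def)
  have s2: "(\<Sum>V\<in>A. b' V) = 1" by (rule nerve_points_sum_superset[OF b' fA]) (auto simp: A_def)
  have "(\<Sum>V\<in>A. \<bar>interpolate c a b V - interpolate c' a' b' V\<bar>)
      \<le> (\<Sum>V\<in>A. \<bar>a V - a' V\<bar> + \<bar>b V - b' V\<bar> + \<bar>c - c'\<bar> * (a' V + b' V))"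
    by (rule sum_mono) (unfold interpolate_def, rule abs_interpolate_diff_le[OF c c' nerve_points_nonneg[OF a'] nerve_points_nonneg[OF b']])
  also have "\<dots> = l1_dist a a' + l1_dist b b' + \<bar>c - c'\<bar> * ((\<Sum>V\<in>A. a' V) + (\<Sum>V\<in>A. b' V))"
    by (simp add: e2 e3 sum.distrib sum_distrib_left[symmetric])
  also have "\<dots> = 2 * \<bar>c - c'\<bar> + l1_dist a a' + l1_dist b b'"
    by (simp add: s1 s2)
  finally show ?thesis using e1 by simp
qed

lemma interpolate_in_nerve_points:
  assumes a: "a \<in> nerve_points U" and b: "b \<in> nerve_points U" and sub: "fsupp b \<subseteq> fsupp a"
    and c: "c \<in> {0..1}"
  shows "interpolate c a b \<in> nerve_points U"
proof -
  have fs: "fsupp (interpolate c a b) \<subseteq> fsupp a" using fsupp_interpolate[of c a b] sub by auto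
  have fa: "finite (fsupp a)" using a by (simp add: nerve_points_finite_fsupp)
  have nn: "0 \<le> interpolate c a b V" for V
    using c nerve_points_nonneg[OF a, of V] nerve_points_nonneg[OF b, of V] by (simp add: interpolate_def)
  have "\<Inter>(fsupp a) \<subseteq> \<Inter>(fsupp (interpolate c a b))" using fs by auto
  moreover have "\<Inter>(fsupp a) \<noteq> {}" using a by (simp add: nerve_points_def)
  ultimately have ne: "\<Inter>(fsupp (interpolate c a b)) \<noteq> {}" by auto
  have "(\<Sum>V\<in>fsupp (interpolate c a b). interpolate c a b V) = (\<Sum>V\<in>fsupp a. interpolate c a b V)"
    by (rule sum.mono_neutral_left[OF fa fs]) (auto simp: fsupp_def)
  also have "\<dots> = (1 - c) * (\<Sum>V\<in>fsupp a. a V) + c * (\<Sum>V\<in>fsupp a. b V)"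
    by (simp add: interpolate_def sum.distrib sum_distrib_left)
  also have "\<dots> = 1"
    using nerve_points_sum_superset[OF a fa] nerve_points_sum_superset[OF b fa sub] by simp
  finally have "(\<Sum>V\<in>fsupp (interpolate c a b). interpolate c a b V) = 1" .
  moreover have "fsupp (interpolate c a b) \<subseteq> U" using fs a by (auto simp: nerve_points_def)
  moreover have "finite (fsupp (interpolate c a b))" using fs fa finite_subset by blast
  ultimately show ?thesis using nn ne unfolding nerve_points_def by blast
qed

lemma l1_continuous_interpolate:
  assumes a: "l1_continuous Z U a" and b: "l1_continuous Z U b" and c: "continuous_map Z euclideanreal c"
    and c01: "\<And>z. z \<in> topspace Z \<Longrightarrow> c z \<in> {0..1}"
    and sub: "\<And>z. z \<in> topspace Z \<Longrightarrow> fsupp (b z) \<subseteq> fsupp (a z)"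
  shows "l1_continuous Z U (\<lambda>z. interpolate (c z) (a z) (b z))"
  unfolding l1_continuous_def
proof (intro conjI ballI allI impI)
  fix z assume z: "z \<in> topspace Z"
  have az: "a z \<in> nerve_points U" and bz: "b z \<in> nerve_points U" using a b z by (auto simp: l1_continuous_def)
  show "interpolate (c z) (a z) (b z) \<in> nerve_points U" by (rule interpolate_in_nerve_points[OF az bz sub[OF z] c01[OF z]])
  fix e :: real assume e: "e > 0"
  obtain Qa where Qa: "openin Z Qa" "z \<in> Qa" "\<forall>z'\<in>Qa. l1_dist (a z) (a z') < e/4"
    using a z e unfolding l1_continuous_def by (meson divide_pos_pos zero_less_numeral)
  obtain Qb where Qb: "openin Z Qb" "z \<in> Qb" "\<forall>z'\<in>Qb. l1_dist (b z) (b z') < e/4"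
    using b z e unfolding l1_continuous_def by (meson divide_pos_pos zero_less_numeral)
  define Qc where "Qc = {z' \<in> topspace Z. c z' \<in> {c z - e/4 <..< c z + e/4}}"
  have Qc: "openin Z Qc" unfolding Qc_def by (rule openin_continuous_map_preimage[OF c]) auto
  show "\<exists>Q. openin Z Q \<and> z \<in> Q \<and> (\<forall>z'\<in>Q. l1_dist (interpolate (c z) (a z) (b z)) (interpolate (c z') (a z') (b z')) < e)"
  proof (intro exI conjI ballI)
    show "openin Z (Qa \<inter> Qb \<inter> Qc)" using Qa Qb Qc by auto
    show "z \<in> Qa \<inter> Qb \<inter> Qc" using Qa Qb z e by (auto simp: Qc_def)
    fix z' assume z': "z' \<in> Qa \<inter> Qb \<inter> Qc"
    then have z'Z: "z' \<in> topspace Z" by (auto simp: Qc_def)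
    have az': "a z' \<in> nerve_points U" and bz': "b z' \<in> nerve_points U" using a b z'Z by (auto simp: l1_continuous_def)
    have "l1_dist (interpolate (c z) (a z) (b z)) (interpolate (c z') (a z') (b z'))
        \<le> 2 * \<bar>c z - c z'\<bar> + l1_dist (a z) (a z') + l1_dist (b z) (b z')"
      by (rule l1_dist_interpolate_le[OF az az' bz bz' c01[OF z] c01[OF z'Z]])
    moreover have "\<bar>c z - c z'\<bar> < e/4"
    proof -
      have "c z - e/4 < c z'" "c z' < c z + e/4" using z' by (auto simp: Qc_def)
      then show ?thesis by (simp only: abs_less_iff) linarith
    qed
    moreover have "l1_dist (a z) (a z') < e/4" "l1_dist (b z) (b z') < e/4" using z' Qa Qb by auto
    ultimately show "l1_dist (interpolate (c z) (a z) (b z)) (interpolate (c z') (a z') (b z')) < e"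
      by (simp add: field_simps)
  qed
qed

context
  fixes X :: "'a topology" and U :: "'a set set" and \<phi> :: "'a set \<Rightarrow> 'a \<Rightarrow> real"
  assumes pou: "partition_of_unity X U \<phi>"
begin

lemma pou_continuous: "V \<in> U \<Longrightarrow> continuous_map X euclideanreal (\<phi> V)"
  using pou by (simp add: partition_of_unity_def)

lemma pou_nonneg: "x \<in> topspace X \<Longrightarrow> 0 \<le> \<phi> V x"
  using pou by (simp add: partition_of_unity_def)

lemma pou_nonzero_imp:
  assumes "x \<in> topspace X" "\<phi> V x \<noteq> 0"
  shows "V \<in> U" "x \<in> V"
proof -
  show VU: "V \<in> U" using pou assms by (auto simp: partition_of_unity_def)
  have "x \<in> {y \<in> topspace X. \<phi> V y \<noteq> 0}" using assms by simp
  also have "\<dots> \<subseteq> X closure_of {y \<in> topspace X. \<phi> V y \<noteq> 0}" by (rule closure_of_subset) auto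
  also have "\<dots> \<subseteq> V" using pou VU by (simp add: partition_of_unity_def)
  finally show "x \<in> V" .
qed

lemma pou_locally_finite:
  assumes "x \<in> topspace X"
  obtains W where "openin X W" "x \<in> W" "finite {V\<in>U. \<exists>y\<in>W. \<phi> V y \<noteq> 0}"
  using pou assms by (auto simp: partition_of_unity_def)

lemma pou_sum_eq_1: "x \<in> topspace X \<Longrightarrow> (\<Sum>V\<in>{V\<in>U. \<phi> V x \<noteq> 0}. \<phi> V x) = 1"
  using pou by (simp add: partition_of_unity_def)

lemma fsupp_canonical_map: "fsupp (canonical_map \<phi> x) = {V. \<phi> V x \<noteq> 0}"
  by (simp add: fsupp_def canonical_map_def)

lemma fsupp_canonical_map_eq: "x \<in> topspace X \<Longrightarrow> fsupp (canonical_map \<phi> x) = {V\<in>U. \<phi> V x \<noteq> 0}"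
  using pou_nonzero_imp(1) by (auto simp: fsupp_canonical_map)

lemma in_Inter_fsupp_canonical_map: "x \<in> topspace X \<Longrightarrow> x \<in> \<Inter>(fsupp (canonical_map \<phi> x))"
  using pou_nonzero_imp(2) by (auto simp: fsupp_canonical_map)

lemma canonical_map_in_nerve_points:
  assumes x: "x \<in> topspace X"
  shows "canonical_map \<phi> x \<in> nerve_points U"
proof -
  obtain W where W: "openin X W" "x \<in> W" "finite {V\<in>U. \<exists>y\<in>W. \<phi> V y \<noteq> 0}"
    using pou_locally_finite[OF x] by blast
  have "fsupp (canonical_map \<phi> x) \<subseteq> {V\<in>U. \<exists>y\<in>W. \<phi> V y \<noteq> 0}"
    using W(2) fsupp_canonical_map_eq[OF x] by auto
  then have fin: "finite (fsupp (canonical_map \<phi> x))" using W(3) finite_subset by blast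
  have "\<forall>V. 0 \<le> canonical_map \<phi> x V" using pou_nonneg[OF x] by (simp add: canonical_map_def)
  moreover have "fsupp (canonical_map \<phi> x) \<subseteq> U" using fsupp_canonical_map_eq[OF x] by auto
  moreover have "\<Inter>(fsupp (canonical_map \<phi> x)) \<noteq> {}" using in_Inter_fsupp_canonical_map[OF x] by auto
  moreover have "(\<Sum>V\<in>fsupp (canonical_map \<phi> x). canonical_map \<phi> x V) = 1"
    using pou_sum_eq_1[OF x] fsupp_canonical_map_eq[OF x] by (simp add: canonical_map_def)
  ultimately show ?thesis using fin unfolding nerve_points_def by blast
qed

lemma l1_continuous_canonical_map: "l1_continuous X U (canonical_map \<phi>)"
  unfolding l1_continuous_def
proof (intro conjI ballI allI impI)
  fix x assume x: "x \<in> topspace X"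
  then show "canonical_map \<phi> x \<in> nerve_points U" by (rule canonical_map_in_nerve_points)
  fix e :: real assume e: "e > 0"
  obtain W where W: "openin X W" "x \<in> W" "finite {V\<in>U. \<exists>y\<in>W. \<phi> V y \<noteq> 0}"
    using pou_locally_finite[OF x] by blast
  define F where "F = {V\<in>U. \<exists>y\<in>W. \<phi> V y \<noteq> 0}"
  define g where "g = (\<lambda>y. \<Sum>V\<in>F. \<bar>\<phi> V x - \<phi> V y\<bar>)"
  have gc: "continuous_map X euclideanreal g"
    unfolding g_def
    by (intro continuous_map_sum continuous_map_real_abs continuous_map_diff continuous_map_const[THEN iffD2] pou_continuous)
       (use W(3) x in \<open>auto simp: F_def\<close>)
  have "openin X {y \<in> topspace X. g y \<in> {..<e}}"
    by (rule openin_continuous_map_preimage[OF gc]) auto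
  then have Q: "openin X (W \<inter> {y \<in> topspace X. g y \<in> {..<e}})" using W(1) by auto
  have gx: "g x = 0" by (simp add: g_def)
  show "\<exists>Q. openin X Q \<and> x \<in> Q \<and> (\<forall>z'\<in>Q. l1_dist (canonical_map \<phi> x) (canonical_map \<phi> z') < e)"
  proof (intro exI conjI ballI)
    show "openin X (W \<inter> {y \<in> topspace X. g y \<in> {..<e}})" by (rule Q)
    show "x \<in> W \<inter> {y \<in> topspace X. g y \<in> {..<e}}" using W(2) x gx e by simp
    fix y assume y: "y \<in> W \<inter> {y \<in> topspace X. g y \<in> {..<e}}"
    have "l1_dist (canonical_map \<phi> x) (canonical_map \<phi> y) = (\<Sum>V\<in>F. \<bar>canonical_map \<phi> x V - canonical_map \<phi> y V\<bar>)"
      by (rule l1_dist_eq_sum_superset) (use W(2,3) y x in \<open>auto simp: F_def fsupp_canonical_map_eq\<close>)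
    also have "\<dots> = g y" by (simp add: g_def canonical_map_def)
    finally show "l1_dist (canonical_map \<phi> x) (canonical_map \<phi> y) < e" using y by simp
  qed
qed

lemma continuous_map_canonical_map: "continuous_map X (nerve_top U) (canonical_map \<phi>)"
  by (rule continuous_map_l1_continuous[OF l1_continuous_canonical_map])

end

context
  fixes X :: "'a topology" and x0 :: 'a and U :: "'a set set" and U0 :: "'a set"
    and \<phi> :: "'a set \<Rightarrow> 'a \<Rightarrow> real"
  assumes x0: "x0 \<in> topspace X" and poc: "pointed_open_cover X x0 U U0"
    and pou: "partition_of_unity X U \<phi>"
begin

lemma pou_base_nonzero_imp: "\<phi> V x0 \<noteq> 0 \<Longrightarrow> V = U0"
  using pou_nonzero_imp[OF pou x0] poc unfolding pointed_open_cover_def by blast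

lemma canonical_map_base: "canonical_map \<phi> x0 = nerve_vertex U0"
proof -
  have sub: "{V\<in>U. \<phi> V x0 \<noteq> 0} \<subseteq> {U0}" using pou_base_nonzero_imp by auto
  have ne: "\<phi> U0 x0 \<noteq> 0"
  proof
    assume "\<phi> U0 x0 = 0"
    then have "{V\<in>U. \<phi> V x0 \<noteq> 0} = {}" using sub by auto
    then show False using pou_sum_eq_1[OF pou x0] by simp
  qed
  have U0: "U0 \<in> U" using poc by (simp add: pointed_open_cover_def)
  have "{V\<in>U. \<phi> V x0 \<noteq> 0} = {U0}" using sub ne U0 by auto
  then have one: "\<phi> U0 x0 = 1" using pou_sum_eq_1[OF pou x0] by simp
  show ?thesis
  proof
    fix V show "canonical_map \<phi> x0 V = nerve_vertex U0 V"
      using one pou_base_nonzero_imp[of V] by (cases "V = U0") (auto simp: canonical_map_def nerve_vertex_def)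
  qed
qed

end

subsection \<open>Piecewise linear loops in the nerve\<close>

lemma sum_hats_beyond:
  fixes x :: real
  assumes "real n \<le> x"
  shows "(\<Sum>i\<le>n. max 0 (1 - \<bar>x - real i\<bar>)) = max 0 (1 - (x - real n))"
  using assms
proof (induction n)
  case 0 then show ?case by simp
next
  case (Suc n)
  have "(\<Sum>i\<le>n. max 0 (1 - \<bar>x - real i\<bar>)) = max 0 (1 - (x - real n))" using Suc by simp
  also have "\<dots> = 0" using Suc.prems by simp
  finally show ?case using Suc.prems by (simp add: sum.atMost_Suc)
qed

lemma sum_hats_eq_1:
  fixes x :: real
  assumes "0 \<le> x" "x \<le> real n"
  shows "(\<Sum>i\<le>n. max 0 (1 - \<bar>x - real i\<bar>)) = 1"
  using assms
proof (induction n)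
  case 0 then show ?case by simp
next
  case (Suc n)
  show ?case
  proof (cases "x \<le> real n")
    case True
    then have "(\<Sum>i\<le>n. max 0 (1 - \<bar>x - real i\<bar>)) = 1" using Suc by simp
    moreover have "max 0 (1 - \<bar>x - real (Suc n)\<bar>) = 0" using True by simp
    ultimately show ?thesis by (simp add: sum.atMost_Suc)
  next
    case False
    then have "(\<Sum>i\<le>n. max 0 (1 - \<bar>x - real i\<bar>)) = max 0 (1 - (x - real n))"
      by (intro sum_hats_beyond) simp
    also have "\<dots> = 1 - (x - real n)" using False Suc.prems by simp
    finally show ?thesis using False Suc.prems by (simp add: sum.atMost_Suc)
  qed
qed

definition tent :: "nat \<Rightarrow> nat \<Rightarrow> real \<Rightarrow> real" where
  "tent n i t = max 0 (1 - \<bar>real n * t - real i\<bar>)"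

definition nerve_path :: "nat \<Rightarrow> (nat \<Rightarrow> 'v) \<Rightarrow> real \<Rightarrow> 'v \<Rightarrow> real" where
  "nerve_path n V t = (\<lambda>W. \<Sum>i\<in>{i\<in>{..n}. V i = W}. tent n i t)"

lemma tent_nonneg: "0 \<le> tent n i t"
  by (simp add: tent_def)

lemma tent_nonzero_imp:
  assumes "tent n i t \<noteq> 0" "0 < n"
  shows "(real i - 1) / real n \<le> t" "t \<le> (real i + 1) / real n"
proof -
  have "\<bar>real n * t - real i\<bar> < 1" using assms(1) by (auto simp: tent_def max_def split: if_splits)
  then have "real i - 1 \<le> real n * t" "real n * t \<le> real i + 1" by auto
  then show "(real i - 1) / real n \<le> t" "t \<le> (real i + 1) / real n"
    using assms(2) by (auto simp: field_simps)
qed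

lemma sum_tent_eq_1: "t \<in> {0..1} \<Longrightarrow> (\<Sum>i\<le>n. tent n i t) = 1"
  unfolding tent_def by (intro sum_hats_eq_1) (auto simp: mult_left_le)

lemma nerve_path_nonzero_imp:
  assumes "nerve_path n V t W \<noteq> 0"
  obtains i where "i \<le> n" "V i = W" "tent n i t \<noteq> 0"
proof -
  obtain i where "i \<in> {i\<in>{..n}. V i = W}" "tent n i t \<noteq> 0"
    using assms unfolding nerve_path_def by (rule sum.not_neutral_contains_not_neutral)
  then show thesis using that by blast
qed

lemma fsupp_nerve_path: "fsupp (nerve_path n V t) \<subseteq> V ` {..n}"
proof
  fix W assume "W \<in> fsupp (nerve_path n V t)"
  then obtain i where "i \<le> n" "V i = W"
    by (auto simp: fsupp_def elim: nerve_path_nonzero_imp)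
  then show "W \<in> V ` {..n}" by auto
qed

lemma sum_image_fibres:
  fixes n :: nat
  shows "(\<Sum>W\<in>V ` {..n}. \<Sum>i\<in>{i\<in>{..n}. V i = W}. h i) = (\<Sum>i\<le>n. h i)"
  by (rule sum.image_gen[symmetric]) simp

lemma nerve_path_0: "nerve_path n V 0 = nerve_vertex (V 0)"
proof
  fix W
  have "tent n i 0 = (if i = 0 then 1 else 0)" for i by (simp add: tent_def)
  then have "nerve_path n V 0 W = (\<Sum>i\<in>{i\<in>{..n}. V i = W}. if i = 0 then 1 else 0)"
    by (simp add: nerve_path_def)
  also have "\<dots> = (if 0 \<in> {i\<in>{..n}. V i = W} then 1 else 0)" by (rule sum.delta) simp
  finally show "nerve_path n V 0 W = nerve_vertex (V 0) W" by (auto simp: nerve_vertex_def)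
qed

lemma nerve_path_1: "nerve_path n V 1 = nerve_vertex (V n)"
proof
  fix W
  have r: "tent n i 1 = (if i = n then 1 else 0)" if "i \<le> n" for i
  proof (cases "i = n")
    case False
    then have "real i + 1 \<le> real n" using that by linarith
    then show ?thesis using False by (simp add: tent_def)
  qed (simp add: tent_def)
  have "nerve_path n V 1 W = (\<Sum>i\<in>{i\<in>{..n}. V i = W}. if i = n then 1 else 0)"
    unfolding nerve_path_def by (rule sum.cong) (auto simp: r)
  also have "\<dots> = (if n \<in> {i\<in>{..n}. V i = W} then 1 else 0)" by (rule sum.delta) simp
  finally show "nerve_path n V 1 W = nerve_vertex (V n) W" by (auto simp: nerve_vertex_def)
qed

lemma nerve_path_in_nerve_points:
  assumes "t \<in> {0..1}" "V ` {..n} \<subseteq> U" "\<Inter>(fsupp (nerve_path n V t)) \<noteq> {}"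
  shows "nerve_path n V t \<in> nerve_points U"
proof -
  have img: "fsupp (nerve_path n V t) \<subseteq> V ` {..n}" by (rule fsupp_nerve_path)
  have nonneg: "\<forall>W. 0 \<le> nerve_path n V t W"
    by (auto simp: nerve_path_def tent_nonneg intro: sum_nonneg)
  have fin: "finite (fsupp (nerve_path n V t))" using img finite_subset by blast
  have sub: "fsupp (nerve_path n V t) \<subseteq> U" using img assms(2) by blast
  have "(\<Sum>W\<in>fsupp (nerve_path n V t). nerve_path n V t W) = (\<Sum>W\<in>V ` {..n}. nerve_path n V t W)"
    by (rule sum.mono_neutral_left[OF _ img]) (auto simp: fsupp_def)
  also have "\<dots> = (\<Sum>i\<le>n. tent n i t)"
    unfolding nerve_path_def by (rule sum_image_fibres)
  also have "\<dots> = 1" by (rule sum_tent_eq_1[OF assms(1)])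
  finally show ?thesis using nonneg fin sub assms(3) unfolding nerve_points_def by blast
qed

lemma l1_continuous_nerve_path:
  assumes "\<And>t. t \<in> {0..1} \<Longrightarrow> nerve_path n V t \<in> nerve_points U"
  shows "l1_continuous (top_of_set {0..1}) U (nerve_path n V)"
  unfolding l1_continuous_def
proof (intro conjI ballI allI impI)
  fix t assume t: "t \<in> topspace (top_of_set {0..1::real})"
  then show "nerve_path n V t \<in> nerve_points U" using assms by simp
  fix e :: real assume e: "e > 0"
  define g where "g s = (\<Sum>i\<le>n. \<bar>tent n i t - tent n i s\<bar>)" for s
  have "continuous_on S (tent n i)" for S i
    unfolding tent_def by (intro continuous_intros)
  then have "continuous_map (top_of_set {0..1}) euclideanreal g"
    unfolding g_def continuous_map_iff_continuous by (intro continuous_intros)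
  then have Q: "openin (top_of_set {0..1}) {s \<in> topspace (top_of_set {0..1}). g s \<in> {..<e}}"
    by (rule openin_continuous_map_preimage) auto
  show "\<exists>Q. openin (top_of_set {0..1}) Q \<and> t \<in> Q \<and> (\<forall>s\<in>Q. l1_dist (nerve_path n V t) (nerve_path n V s) < e)"
  proof (intro exI conjI ballI)
    show "t \<in> {s \<in> topspace (top_of_set {0..1}). g s \<in> {..<e}}" using t e by (simp add: g_def)
    fix s assume s: "s \<in> {s \<in> topspace (top_of_set {0..1::real}). g s \<in> {..<e}}"
    have "l1_dist (nerve_path n V t) (nerve_path n V s) = (\<Sum>W\<in>V ` {..n}. \<bar>nerve_path n V t W - nerve_path n V s W\<bar>)"
      by (rule l1_dist_eq_sum_superset) (use fsupp_nerve_path[of n V t] fsupp_nerve_path[of n V s] in auto)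
    also have "\<dots> \<le> (\<Sum>W\<in>V ` {..n}. \<Sum>i\<in>{i\<in>{..n}. V i = W}. \<bar>tent n i t - tent n i s\<bar>)"
    proof (rule sum_mono)
      fix W
      have "\<bar>nerve_path n V t W - nerve_path n V s W\<bar> = \<bar>\<Sum>i\<in>{i\<in>{..n}. V i = W}. tent n i t - tent n i s\<bar>"
        by (simp add: nerve_path_def sum_subtractf)
      also have "\<dots> \<le> (\<Sum>i\<in>{i\<in>{..n}. V i = W}. \<bar>tent n i t - tent n i s\<bar>)"
        by (rule sum_abs)
      finally show "\<bar>nerve_path n V t W - nerve_path n V s W\<bar> \<le> (\<Sum>i\<in>{i\<in>{..n}. V i = W}. \<bar>tent n i t - tent n i s\<bar>)" .
    qed
    also have "\<dots> = g s" unfolding g_def by (rule sum_image_fibres)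
    finally show "l1_dist (nerve_path n V t) (nerve_path n V s) < e" using s by simp
  qed (rule Q)
qed

text \<open>The straight segment between the two loops stays inside a simplex of the nerve at every time.\<close>

lemma loop_homotopic_nerve_segment:
  assumes a: "l1_continuous (top_of_set {0..1}) U a" and b: "l1_continuous (top_of_set {0..1}) U b"
    and sub: "\<And>t. t \<in> {0..1} \<Longrightarrow> fsupp (b t) \<subseteq> fsupp (a t)"
    and f: "f \<in> loops (nerve_top U) v" and g: "g \<in> loops (nerve_top U) v"
    and fa: "\<And>t. t \<in> {0..1} \<Longrightarrow> f t = a t" and gb: "\<And>t. t \<in> {0..1} \<Longrightarrow> g t = b t"
  shows "loop_homotopic (nerve_top U) v f g"
proof -
  let ?D = "{0..1::real} \<times> {0..1::real}"
  let ?H = "\<lambda>z. interpolate (fst z) (a (snd z)) (b (snd z))"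
  have snd: "continuous_map (top_of_set ?D) (top_of_set {0..1}) snd"
    by (auto intro: continuous_intros)
  have H: "l1_continuous (top_of_set ?D) U ?H"
  proof (rule l1_continuous_interpolate[OF l1_continuous_compose[OF a snd] l1_continuous_compose[OF b snd]])
    show "continuous_map (top_of_set ?D) euclideanreal fst" by (auto intro: continuous_intros)
    show "fst z \<in> {0..1}" if "z \<in> topspace (top_of_set ?D)" for z using that by auto
    show "fsupp (b (snd z)) \<subseteq> fsupp (a (snd z))" if "z \<in> topspace (top_of_set ?D)" for z
      using that sub[of "snd z"] by auto
  qed
  have ends: "a 0 = v" "a 1 = v" "b 0 = v" "b 1 = v"
    using fa[of 0] fa[of 1] gb[of 0] gb[of 1] loopsD(2,3)[OF f] loopsD(2,3)[OF g] by auto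
  show ?thesis
  proof (rule loop_homotopicI[OF f g continuous_map_l1_continuous[OF H]])
    show "?H (0, t) = f t" if "t \<in> {0..1}" for t
      by (simp only: fst_conv snd_conv interpolate_0 fa[OF that])
    show "?H (1, t) = g t" if "t \<in> {0..1}" for t
      by (simp only: fst_conv snd_conv interpolate_1 gb[OF that])
    show "?H (s, 0) = v \<and> ?H (s, 1) = v" for s
      by (simp only: fst_conv snd_conv ends interpolate_same simp_thms)
  qed
qed

subsection \<open>Loops close to a given loop in the compact-open topology\<close>

lemma path_subdivision:
  assumes \<gamma>: "pathin X \<gamma>" and opn: "\<forall>i\<in>I. openin X (W i)"
    and cover: "\<forall>t\<in>{0..1}. \<exists>i\<in>I. \<gamma> t \<in> W i"
  obtains n V where "0 < n" "\<And>k. V k \<in> I"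
    "\<And>k t. \<lbrakk>t \<in> {0..1}; (real k - 1) / real n \<le> t; t \<le> (real k + 1) / real n\<rbrakk> \<Longrightarrow> \<gamma> t \<in> W (V k)"
proof -
  have "openin (top_of_set {0..1}) {t \<in> {0..1}. \<gamma> t \<in> W i}" if "i \<in> I" for i
    using openin_continuous_map_preimage[OF \<gamma>[unfolded pathin_def]] opn that by simp
  then have "\<forall>i\<in>I. \<exists>T. open T \<and> {t \<in> {0..1}. \<gamma> t \<in> W i} = {0..1} \<inter> T"
    by (simp add: openin_open)
  then obtain G where G: "\<And>i. i \<in> I \<Longrightarrow> open (G i) \<and> {t \<in> {0..1}. \<gamma> t \<in> W i} = {0..1} \<inter> G i"
    by metis
  obtain \<delta> where \<delta>: "0 < \<delta>" "\<And>T. \<lbrakk>T \<subseteq> {0..1::real}; diameter T < \<delta>\<rbrakk> \<Longrightarrow> \<exists>B \<in> G ` I. T \<subseteq> B"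
  proof (rule Lebesgue_number_lemma[of "{0..1::real}" "G ` I"])
    show "G ` I \<noteq> {}" using cover by fastforce
    show "{0..1} \<subseteq> \<Union> (G ` I)" using cover G by fastforce
  qed (use G in auto)
  obtain n :: nat where n: "2 / \<delta> < real n" using reals_Archimedean2 by blast
  have npos: "0 < n" using n \<delta>(1) by (metis divide_pos_pos of_nat_0_less_iff order.strict_trans zero_less_numeral)
  have small: "2 / real n < \<delta>" using n npos \<delta>(1) by (simp add: field_simps)
  define K where "K k = {0..1} \<inter> {(real k - 1) / real n .. (real k + 1) / real n}" for k :: nat
  have "\<exists>i\<in>I. \<forall>t\<in>K k. \<gamma> t \<in> W i" for k
  proof -
    have "diameter (K k) \<le> diameter {(real k - 1) / real n .. (real k + 1) / real n}"
      by (rule diameter_subset) (auto simp: K_def)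
    also have "\<dots> \<le> 2 / real n" using npos by (simp add: field_simps)
    finally obtain i where i: "i \<in> I" "K k \<subseteq> G i" using \<delta>(2)[of "K k"] small by (auto simp: K_def)
    then have "K k \<subseteq> {0..1} \<inter> G i" by (auto simp: K_def)
    then show ?thesis using G[of i] i(1) by blast
  qed
  then obtain V where V: "\<And>k. V k \<in> I" "\<And>k t. t \<in> K k \<Longrightarrow> \<gamma> t \<in> W (V k)"
    by metis
  show thesis
  proof (rule that[OF npos V(1)])
    fix k t assume "t \<in> {0..1}" "(real k - 1) / real n \<le> t" "t \<le> (real k + 1) / real n"
    then show "\<gamma> t \<in> W (V k)" by (intro V(2)) (simp add: K_def)
  qed
qed

lemma openin_loop_space_compact_open:
  assumes "finite I" "\<And>i. i \<in> I \<Longrightarrow> compact (K i)" "\<And>i. i \<in> I \<Longrightarrow> K i \<subseteq> {0..1}"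
    "\<And>i. i \<in> I \<Longrightarrow> openin X (W i)"
  shows "openin (loop_space X x0) {g \<in> loops X x0. \<forall>i\<in>I. g ` K i \<subseteq> W i}"
proof -
  define S where "S = {{g \<in> loops X x0. g ` K' \<subseteq> W'} | K' W'. compact K' \<and> K' \<subseteq> {0..1} \<and> openin X W'}"
  define B where "B i = {g \<in> loops X x0. g ` K i \<subseteq> W i}" for i
  define B0 where "B0 = {g \<in> loops X x0. g ` {} \<subseteq> topspace X}"
  have "B0 \<in> S"
    unfolding S_def B0_def by (intro CollectI exI[of _ "{}"] exI[of _ "topspace X"]) auto
  moreover have "B i \<in> S" if "i \<in> I" for i
    unfolding S_def B_def using assms(2-4)[OF that] by blast
  ultimately have "generate_topology_on S (\<Inter> (insert B0 (B ` I)))"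
    by (intro generate_topology_on_Inter generate_topology_on.Basis) (auto simp: assms(1))
  moreover have "{g \<in> loops X x0. \<forall>i\<in>I. g ` K i \<subseteq> W i} = \<Inter> (insert B0 (B ` I)) \<inter> loops X x0"
    by (auto simp: B_def B0_def)
  ultimately show ?thesis
    unfolding loop_space_def S_def[symmetric] openin_subtopology openin_topology_generated_by_iff by blast
qed

context
  fixes X :: "'a topology" and x0 :: 'a and U :: "'a set set" and U0 :: "'a set"
    and \<phi> :: "'a set \<Rightarrow> 'a \<Rightarrow> real"
  assumes x0: "x0 \<in> topspace X" and poc: "pointed_open_cover X x0 U U0"
    and pou: "partition_of_unity X U \<phi>"
begin

text \<open>At every time the support of the piecewise linear loop lies in that of the image of \<beta>.\<close>

lemma canonical_map_loop_homotopic_nerve_path: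
  assumes \<beta>: "\<beta> \<in> loops X x0" and n: "0 < n"
    and Vs: "\<And>k. Vs k \<in> U" "Vs 0 = U0" "Vs n = U0"
    and pos: "\<And>k t. \<lbrakk>k \<le> n; t \<in> {0..1}; (real k - 1) / real n \<le> t; t \<le> (real k + 1) / real n\<rbrakk>
      \<Longrightarrow> 0 < \<phi> (Vs k) (\<beta> t)"
  shows "loop_homotopic (nerve_top U) (nerve_vertex U0) (canonical_map \<phi> \<circ> \<beta>)
    (\<lambda>t. if t \<in> {0..1} then nerve_path n Vs t else nerve_vertex U0)"
proof -
  let ?p = "canonical_map \<phi>" and ?v0 = "nerve_vertex U0" and ?NT = "nerve_top U"
  let ?\<theta> = "nerve_path n Vs"
  have supp: "fsupp (?\<theta> t) \<subseteq> fsupp (?p (\<beta> t))" if t: "t \<in> {0..1}" for t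
  proof
    fix V assume "V \<in> fsupp (?\<theta> t)"
    then obtain k where k: "k \<le> n" "Vs k = V" "tent n k t \<noteq> 0"
      by (auto simp: fsupp_def elim: nerve_path_nonzero_imp)
    then have "0 < \<phi> V (\<beta> t)" using pos t tent_nonzero_imp[OF k(3) n] by blast
    then show "V \<in> fsupp (?p (\<beta> t))" by (simp add: fsupp_def canonical_map_def)
  qed
  have "?\<theta> t \<in> nerve_points U" if t: "t \<in> {0..1}" for t
  proof -
    have "\<beta> t \<in> \<Inter>(fsupp (?\<theta> t))"
      using supp[OF t] in_Inter_fsupp_canonical_map[OF pou loops_in_topspace[OF \<beta> t]] by blast
    then show ?thesis by (intro nerve_path_in_nerve_points[OF t]) (auto intro: Vs(1))
  qed
  then have \<theta>: "l1_continuous (top_of_set {0..1}) U ?\<theta>"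
    by (rule l1_continuous_nerve_path)
  have "pathin ?NT (\<lambda>t. if t \<in> {0..1} then ?\<theta> t else ?v0)"
    unfolding pathin_def by (rule continuous_map_eq[OF continuous_map_l1_continuous[OF \<theta>]]) simp
  then have \<theta>_loop: "(\<lambda>t. if t \<in> {0..1} then ?\<theta> t else ?v0) \<in> loops ?NT ?v0"
    using Vs(2,3) by (simp add: loops_def nerve_path_0 nerve_path_1)
  show ?thesis
  proof (rule loop_homotopic_nerve_segment[OF _ \<theta> supp _ \<theta>_loop])
    show "l1_continuous (top_of_set {0..1}) U (\<lambda>t. ?p (\<beta> t))"
      by (rule l1_continuous_compose[OF l1_continuous_canonical_map[OF pou] loopsD(1)[OF \<beta>, unfolded pathin_def]])
    show "?p \<circ> \<beta> \<in> loops ?NT ?v0"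
      by (rule comp_in_loops[OF continuous_map_canonical_map[OF pou] canonical_map_base[OF x0 poc pou] \<beta>])
  qed simp_all
qed

text \<open>A subdivision of the time interval adapted to the cover (Lebesgue number) defines a
  compact-open neighbourhood of \<alpha> on which the previous lemma applies with the same vertices.\<close>

lemma canonical_map_loop_locally_homotopic:
  assumes \<alpha>: "\<alpha> \<in> loops X x0"
  shows "\<exists>N. openin (loop_space X x0) N \<and> \<alpha> \<in> N \<and>
    (\<forall>\<beta>\<in>N. loop_homotopic (nerve_top U) (nerve_vertex U0) (canonical_map \<phi> \<circ> \<beta>) (canonical_map \<phi> \<circ> \<alpha>))"
proof -
  define Pos where "Pos V = {x \<in> topspace X. 0 < \<phi> V x}" for V
  have Pos_open: "\<forall>V\<in>U. openin X (Pos V)"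
    unfolding Pos_def
    by (metis openin_continuous_map_preimage[OF pou_continuous[OF pou], of _ "{0<..}", simplified])
  have cover: "\<forall>t\<in>{0..1}. \<exists>V\<in>U. \<alpha> t \<in> Pos V"
  proof
    fix t :: real assume t: "t \<in> {0..1}"
    have at: "\<alpha> t \<in> topspace X" by (rule loops_in_topspace[OF \<alpha> t])
    then have "{V\<in>U. \<phi> V (\<alpha> t) \<noteq> 0} \<noteq> {}" using pou_sum_eq_1[OF pou at] by force
    then show "\<exists>V\<in>U. \<alpha> t \<in> Pos V" using pou_nonneg[OF pou at] at by (force simp: Pos_def less_le)
  qed
  obtain n Vs where n: "0 < n" and Vs: "\<And>k. Vs k \<in> U"
    "\<And>k t. \<lbrakk>t \<in> {0..1}; (real k - 1) / real n \<le> t; t \<le> (real k + 1) / real n\<rbrakk> \<Longrightarrow> \<alpha> t \<in> Pos (Vs k)"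
    by (rule path_subdivision[OF loopsD(1)[OF \<alpha>] Pos_open cover]) (rule that)
  have "\<phi> (Vs k) x0 \<noteq> 0" if "k = 0 \<or> k = n" for k
    using Vs(2)[of 0 0] Vs(2)[of 1 n] that n loopsD(2,3)[OF \<alpha>] by (auto simp: Pos_def)
  then have ends: "Vs 0 = U0" "Vs n = U0" using pou_base_nonzero_imp[OF x0 poc pou] by auto
  define K where "K k = {0..1} \<inter> {(real k - 1) / real n .. (real k + 1) / real n}" for k
  define N where "N = {\<beta> \<in> loops X x0. \<forall>k\<in>{..n}. \<beta> ` K k \<subseteq> Pos (Vs k)}"
  have N_open: "openin (loop_space X x0) N"
    unfolding N_def K_def by (rule openin_loop_space_compact_open) (use Pos_open Vs(1) in auto)
  have \<alpha>N: "\<alpha> \<in> N" using \<alpha> Vs(2) by (auto simp: N_def K_def)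
  have hom: "loop_homotopic (nerve_top U) (nerve_vertex U0) (canonical_map \<phi> \<circ> \<beta>)
      (\<lambda>t. if t \<in> {0..1} then nerve_path n Vs t else nerve_vertex U0)" if \<beta>: "\<beta> \<in> N" for \<beta>
  proof (rule canonical_map_loop_homotopic_nerve_path[OF _ n Vs(1) ends])
    show "\<beta> \<in> loops X x0" using \<beta> by (simp add: N_def)
    fix k t assume "k \<le> n" "t \<in> {0..1}" "(real k - 1) / real n \<le> t" "t \<le> (real k + 1) / real n"
    then have "t \<in> K k" by (simp add: K_def)
    then have "\<beta> t \<in> Pos (Vs k)" using \<beta> \<open>k \<le> n\<close> unfolding N_def by blast
    then show "0 < \<phi> (Vs k) (\<beta> t)" by (simp add: Pos_def)
  qed
  have "loop_homotopic (nerve_top U) (nerve_vertex U0) (canonical_map \<phi> \<circ> \<beta>) (canonical_map \<phi> \<circ> \<alpha>)"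
    if "\<beta> \<in> N" for \<beta>
    using hom[OF that] loop_homotopic_sym[OF hom[OF \<alpha>N]] by (rule loop_homotopic_trans)
  then show ?thesis using N_open \<alpha>N by blast
qed

end

subsection \<open>Quotient, discrete pullback and Markov topologies\<close>

lemma openin_quotient_top:
  "openin (quotient_top T q S) V \<longleftrightarrow> V \<subseteq> S \<and> openin T {x \<in> topspace T. q x \<in> V}"
proof -
  have "istopology (\<lambda>V. V \<subseteq> S \<and> openin T {x \<in> topspace T. q x \<in> V})"
    unfolding istopology_def
  proof (rule conjI; intro allI impI)
    fix A B assume A: "A \<subseteq> S \<and> openin T {x \<in> topspace T. q x \<in> A}"
      and B: "B \<subseteq> S \<and> openin T {x \<in> topspace T. q x \<in> B}"
    have eq: "{x \<in> topspace T. q x \<in> A \<inter> B} = {x \<in> topspace T. q x \<in> A} \<inter> {x \<in> topspace T. q x \<in> B}" by auto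
    have o: "openin T ({x \<in> topspace T. q x \<in> A} \<inter> {x \<in> topspace T. q x \<in> B})"
      using openin_Int[of T "{x \<in> topspace T. q x \<in> A}" "{x \<in> topspace T. q x \<in> B}"] A B by blast
    show "A \<inter> B \<subseteq> S \<and> openin T {x \<in> topspace T. q x \<in> A \<inter> B}"
    proof
      show "A \<inter> B \<subseteq> S" using A by blast
      show "openin T {x \<in> topspace T. q x \<in> A \<inter> B}" unfolding eq by (rule o)
    qed
  next
    fix K assume K: "\<forall>A\<in>K. A \<subseteq> S \<and> openin T {x \<in> topspace T. q x \<in> A}"
    have "{x \<in> topspace T. q x \<in> \<Union>K} = \<Union>((\<lambda>A. {x \<in> topspace T. q x \<in> A}) ` K)" by auto
    moreover have "openin T (\<Union>((\<lambda>A. {x \<in> topspace T. q x \<in> A}) ` K))"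
      by (intro openin_Union) (use K in blast)
    moreover have "\<Union>K \<subseteq> S" using K by blast
    ultimately show "\<Union>K \<subseteq> S \<and> openin T {x \<in> topspace T. q x \<in> \<Union>K}" by simp
  qed
  then show ?thesis unfolding quotient_top_def by simp
qed

lemma topspace_quotient_top:
  assumes "\<And>x. x \<in> topspace T \<Longrightarrow> q x \<in> S"
  shows "topspace (quotient_top T q S) = S"
proof
  have "V \<subseteq> S" if "openin (quotient_top T q S) V" for V using that unfolding openin_quotient_top by simp
  then show "topspace (quotient_top T q S) \<subseteq> S" by (auto simp: topspace_def)
  have "{x \<in> topspace T. q x \<in> S} = topspace T" using assms by auto
  then have "openin (quotient_top T q S) S" unfolding openin_quotient_top by simp
  then show "S \<subseteq> topspace (quotient_top T q S)" by (rule openin_subset)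
qed

definition discrete_pullback :: "'w set \<Rightarrow> ('w \<Rightarrow> 'c) \<Rightarrow> 'w topology" where
  "discrete_pullback C f = topology (\<lambda>Q. \<exists>S. Q = {w \<in> C. f w \<in> S})"

lemma openin_discrete_pullback: "openin (discrete_pullback C f) Q \<longleftrightarrow> (\<exists>S. Q = {w \<in> C. f w \<in> S})"
proof -
  have "istopology (\<lambda>Q. \<exists>S. Q = {w \<in> C. f w \<in> S})"
    unfolding istopology_def
  proof (rule conjI; intro allI impI)
    fix A B assume "\<exists>S. A = {w \<in> C. f w \<in> S}" "\<exists>S. B = {w \<in> C. f w \<in> S}"
    then obtain SA SB where "A = {w \<in> C. f w \<in> SA}" "B = {w \<in> C. f w \<in> SB}" by blast
    then have "A \<inter> B = {w \<in> C. f w \<in> SA \<inter> SB}" by auto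
    then show "\<exists>S. A \<inter> B = {w \<in> C. f w \<in> S}" by blast
  next
    fix K assume K: "\<forall>A\<in>K. \<exists>S. A = {w \<in> C. f w \<in> S}"
    have "\<Union>K = {w \<in> C. f w \<in> f ` \<Union>K}"
    proof
      show "\<Union>K \<subseteq> {w \<in> C. f w \<in> f ` \<Union>K}" using K by blast
      show "{w \<in> C. f w \<in> f ` \<Union>K} \<subseteq> \<Union>K"
      proof
        fix w assume "w \<in> {w \<in> C. f w \<in> f ` \<Union>K}"
        then obtain w' A where w': "w \<in> C" "w' \<in> A" "A \<in> K" "f w = f w'" by auto
        then obtain S where S: "A = {w \<in> C. f w \<in> S}" using K by blast
        have "f w' \<in> S" using w'(2) S by simp
        then have "w \<in> A" using w'(1,4) S by simp
        then show "w \<in> \<Union>K" using w'(3) by blast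
      qed
    qed
    then show "\<exists>S. \<Union>K = {w \<in> C. f w \<in> S}" by blast
  qed
  then show ?thesis unfolding discrete_pullback_def by simp
qed

lemma topspace_discrete_pullback: "topspace (discrete_pullback C f) = C"
proof
  have "Q \<subseteq> C" if "openin (discrete_pullback C f) Q" for Q using that unfolding openin_discrete_pullback by blast
  then show "topspace (discrete_pullback C f) \<subseteq> C" by (auto simp: topspace_def)
  have "openin (discrete_pullback C f) C" unfolding openin_discrete_pullback by (rule exI[of _ UNIV]) simp
  then show "C \<subseteq> topspace (discrete_pullback C f)" by (rule openin_subset)
qed

lemma openin_discrete_pullback_fibre: "openin (discrete_pullback C f) {w \<in> C. f w = c}"
  unfolding openin_discrete_pullback by (rule exI[of _ "{c}"]) simp


context
  fixes S :: "'g topology" and \<psi> :: "('g \<times> bool) list \<Rightarrow> 'd"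
begin

lemma group_topology_discrete_pullback:
  assumes mult: "\<And>v w. \<lbrakk>v \<in> free_group_carrier (topspace S); w \<in> free_group_carrier (topspace S)\<rbrakk>
      \<Longrightarrow> \<psi> (free_mult v w) = M (\<psi> v) (\<psi> w)"
    and inv: "\<And>v. v \<in> free_group_carrier (topspace S) \<Longrightarrow> \<psi> (free_inv v) = I (\<psi> v)"
  shows "group_topology (discrete_pullback (free_group_carrier (topspace S)) \<psi>)
    (free_group_carrier (topspace S)) free_mult free_inv"
proof -
  let ?C = "free_group_carrier (topspace S)"
  let ?T = "discrete_pullback ?C \<psi>"
  have T_mult: "continuous_map (prod_topology ?T ?T) ?T (\<lambda>(a, b). free_mult a b)"
    unfolding continuous_map_def
  proof (intro conjI allI impI)
    show "(\<lambda>(a, b). free_mult a b) \<in> topspace (prod_topology ?T ?T) \<rightarrow> topspace ?T"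
      by (auto simp: topspace_discrete_pullback intro: free_mult_in_carrier)
    fix Q assume "openin ?T Q"
    then obtain D where D: "Q = {w \<in> ?C. \<psi> w \<in> D}" unfolding openin_discrete_pullback by blast
    show "openin (prod_topology ?T ?T) {z \<in> topspace (prod_topology ?T ?T). (case z of (a, b) \<Rightarrow> free_mult a b) \<in> Q}"
      unfolding openin_prod_topology_alt
    proof (intro allI impI)
      fix x y assume "(x, y) \<in> {z \<in> topspace (prod_topology ?T ?T). (case z of (a, b) \<Rightarrow> free_mult a b) \<in> Q}"
      then have x: "x \<in> ?C" and y: "y \<in> ?C" and m: "\<psi> (free_mult x y) \<in> D"
        by (auto simp: topspace_discrete_pullback D)
      have "{w \<in> ?C. \<psi> w = \<psi> x} \<times> {w \<in> ?C. \<psi> w = \<psi> y}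
          \<subseteq> {z \<in> topspace (prod_topology ?T ?T). (case z of (a, b) \<Rightarrow> free_mult a b) \<in> Q}"
      proof
        fix z assume "z \<in> {w \<in> ?C. \<psi> w = \<psi> x} \<times> {w \<in> ?C. \<psi> w = \<psi> y}"
        then obtain a b where z: "z = (a, b)" and a: "a \<in> ?C" "\<psi> a = \<psi> x" and b: "b \<in> ?C" "\<psi> b = \<psi> y"
          by blast
        have "\<psi> (free_mult a b) = \<psi> (free_mult x y)" using mult[OF a(1) b(1)] mult[OF x y] a(2) b(2) by simp
        then show "z \<in> {z \<in> topspace (prod_topology ?T ?T). (case z of (a, b) \<Rightarrow> free_mult a b) \<in> Q}"
          using a(1) b(1) m free_mult_in_carrier[OF a(1) b(1)] by (simp add: z topspace_discrete_pullback D)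
      qed
      moreover have "x \<in> {w \<in> ?C. \<psi> w = \<psi> x}" "y \<in> {w \<in> ?C. \<psi> w = \<psi> y}" using x y by auto
      ultimately show "\<exists>A B. openin ?T A \<and> openin ?T B \<and> x \<in> A \<and> y \<in> B \<and>
          A \<times> B \<subseteq> {z \<in> topspace (prod_topology ?T ?T). (case z of (a, b) \<Rightarrow> free_mult a b) \<in> Q}"
        using openin_discrete_pullback_fibre[of ?C \<psi> "\<psi> x"] openin_discrete_pullback_fibre[of ?C \<psi> "\<psi> y"]
        by blast
    qed
  qed
  have T_inv: "continuous_map ?T ?T free_inv"
    unfolding continuous_map_def
  proof (intro conjI allI impI)
    show "free_inv \<in> topspace ?T \<rightarrow> topspace ?T"
      by (auto simp: topspace_discrete_pullback intro: free_inv_in_carrier)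
    fix Q assume "openin ?T Q"
    then obtain D where D: "Q = {w \<in> ?C. \<psi> w \<in> D}" unfolding openin_discrete_pullback by blast
    have "{x \<in> topspace ?T. free_inv x \<in> Q} = {w \<in> ?C. \<psi> w \<in> {d. I d \<in> D}}"
      using inv free_inv_in_carrier by (auto simp: topspace_discrete_pullback D)
    then show "openin ?T {x \<in> topspace ?T. free_inv x \<in> Q}" unfolding openin_discrete_pullback by blast
  qed
  show ?thesis
    unfolding group_topology_def using T_mult T_inv by (simp add: topspace_discrete_pullback)
qed

lemma continuous_map_free_gen_discrete_pullback:
  assumes gen: "\<And>d. openin S {x \<in> topspace S. \<psi> (free_gen x) = d}"
  shows "continuous_map S (discrete_pullback (free_group_carrier (topspace S)) \<psi>) free_gen"
proof -
  let ?C = "free_group_carrier (topspace S)"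
  have "openin S {x \<in> topspace S. free_gen x \<in> {w \<in> ?C. \<psi> w \<in> D}}" for D
  proof -
    have "{x \<in> topspace S. free_gen x \<in> {w \<in> ?C. \<psi> w \<in> D}} = (\<Union>d\<in>D. {x \<in> topspace S. \<psi> (free_gen x) = d})"
      by (auto simp: free_gen_in_carrier)
    then show ?thesis using gen by auto
  qed
  then show ?thesis
    unfolding continuous_map_def openin_discrete_pullback topspace_discrete_pullback
    by (auto intro: free_gen_in_carrier)
qed

text \<open>The discrete pullback is one of the group topologies whose supremum is the Markov topology.\<close>

lemma openin_markov_top_fibre:
  assumes "\<And>v w. \<lbrakk>v \<in> free_group_carrier (topspace S); w \<in> free_group_carrier (topspace S)\<rbrakk>
      \<Longrightarrow> \<psi> (free_mult v w) = M (\<psi> v) (\<psi> w)"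
    and "\<And>v. v \<in> free_group_carrier (topspace S) \<Longrightarrow> \<psi> (free_inv v) = I (\<psi> v)"
    and "\<And>d. openin S {x \<in> topspace S. \<psi> (free_gen x) = d}"
  shows "openin (markov_top S) {w \<in> free_group_carrier (topspace S). \<psi> w = c}"
proof -
  let ?C = "free_group_carrier (topspace S)"
  let ?F = "\<Union> {{U. openin T U} | T. group_topology T ?C free_mult free_inv \<and> continuous_map S T free_gen}"
  have "{w \<in> ?C. \<psi> w = c} \<in> ?F"
    using group_topology_discrete_pullback[OF assms(1,2)] continuous_map_free_gen_discrete_pullback[OF assms(3)]
      openin_discrete_pullback_fibre[of ?C \<psi> c]
    by blast
  then have "openin (topology_generated_by ?F) {w \<in> ?C. \<psi> w = c}"
    by (rule topology_generated_by_Basis)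
  then show ?thesis
    unfolding markov_top_def openin_subtopology by (intro exI[of _ "{w \<in> ?C. \<psi> w = c}"]) auto
qed

end

lemma topspace_markov_top: "topspace (markov_top S) = free_group_carrier (topspace S)"
proof
  show "topspace (markov_top S) \<subseteq> free_group_carrier (topspace S)"
    by (simp add: markov_top_def)
  have "openin (markov_top S) {w \<in> free_group_carrier (topspace S). () = ()}"
    by (rule openin_markov_top_fibre[where M="\<lambda>_ _. ()" and I="\<lambda>_. ()"]) auto
  then show "free_group_carrier (topspace S) \<subseteq> topspace (markov_top S)"
    by (auto dest: openin_subset)
qed

lemma openin_tau_top_fibre:
  assumes "\<And>w. w \<in> free_group_carrier (topspace G) \<Longrightarrow> word_product mlt iv one w \<in> topspace G"
    and "openin (markov_top G) {w \<in> free_group_carrier (topspace G). f (word_product mlt iv one w) = c}"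
  shows "openin (tau_top G mlt iv one) {x \<in> topspace G. f x = c}"
  unfolding tau_top_def openin_quotient_top topspace_markov_top
proof
  have "{w \<in> free_group_carrier (topspace G). word_product mlt iv one w \<in> {x \<in> topspace G. f x = c}}
      = {w \<in> free_group_carrier (topspace G). f (word_product mlt iv one w) = c}"
    using assms(1) by auto
  then show "openin (markov_top G)
      {w \<in> free_group_carrier (topspace G). word_product mlt iv one w \<in> {x \<in> topspace G. f x = c}}"
    using assms(2) by simp
qed auto

lemma openin_locally_constant_fibre:
  assumes "\<And>x. x \<in> topspace T \<Longrightarrow> \<exists>N. openin T N \<and> x \<in> N \<and> (\<forall>y\<in>N. f y = f x)"
  shows "openin T {x \<in> topspace T. f x = c}"
proof -
  have "\<exists>N. openin T N \<and> x \<in> N \<and> N \<subseteq> {x \<in> topspace T. f x = c}"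
    if x: "x \<in> topspace T" "f x = c" for x
  proof -
    obtain N where N: "openin T N" "x \<in> N" "\<forall>y\<in>N. f y = f x" using assms[OF x(1)] by blast
    have "N \<subseteq> {x \<in> topspace T. f x = c}" using openin_subset[OF N(1)] N(3) x(2) by auto
    with N(1,2) show ?thesis by blast
  qed
  then show ?thesis
    unfolding openin_subopen[of T "{x \<in> topspace T. f x = c}"] by blast
qed

lemma Hausdorff_space_separating_fibres:
  fixes T :: "'a topology"
  assumes "\<And>x y. \<lbrakk>x \<in> topspace T; y \<in> topspace T; x \<noteq> y\<rbrakk>
      \<Longrightarrow> \<exists>f :: 'a \<Rightarrow> 'b. f x \<noteq> f y \<and> (\<forall>c. openin T {z \<in> topspace T. f z = c})"
  shows "Hausdorff_space T"
  unfolding Hausdorff_space_def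
proof (intro allI impI)
  fix x y assume xy: "x \<in> topspace T \<and> y \<in> topspace T \<and> x \<noteq> y"
  then obtain f :: "'a \<Rightarrow> 'b" where "f x \<noteq> f y" "\<forall>c. openin T {z \<in> topspace T. f z = c}"
    using assms by blast
  moreover have "disjnt {z \<in> topspace T. f z = f x} {z \<in> topspace T. f z = f y}"
    using \<open>f x \<noteq> f y\<close> by (auto simp: disjnt_def)
  ultimately show "\<exists>U V. openin T U \<and> openin T V \<and> x \<in> U \<and> y \<in> V \<and> disjnt U V"
    using xy by blast
qed

subsection \<open>Fibres of induced maps are open in the tau topology\<close>

lemma topspace_pi1_qtop: "topspace (pi1_qtop X x0) = pi1_carrier X x0"
  unfolding pi1_qtop_def
  by (rule topspace_quotient_top) (simp add: loop_space_def pi1_carrier_def)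

lemma word_product_pi1_in_carrier:
  assumes x0: "x0 \<in> topspace X" and w: "w \<in> free_group_carrier (pi1_carrier X x0)"
  shows "word_product (pi1_mult X x0) (pi1_inv X x0) (pi1_one X x0) w \<in> pi1_carrier X x0"
proof -
  have l: "fst ` set w \<subseteq> pi1_carrier X x0" using w by (simp add: free_group_carrier_def)
  show ?thesis
    using word_loop_in_loops[OF x0 l] unfolding word_product_pi1[OF x0 l] pi1_carrier_def by (rule imageI)
qed

lemma topspace_pi1_tau:
  assumes "x0 \<in> topspace X"
  shows "topspace (pi1_tau X x0) = pi1_carrier X x0"
  unfolding pi1_tau_def tau_top_def topspace_pi1_qtop
  by (rule topspace_quotient_top)
    (simp add: topspace_markov_top topspace_pi1_qtop word_product_pi1_in_carrier[OF assms])

context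
  fixes X :: "'a topology" and x0 :: 'a and Y :: "'b topology" and y0 :: 'b and p :: "'a \<Rightarrow> 'b"
  assumes x0: "x0 \<in> topspace X" and p: "continuous_map X Y p" and p_base: "p x0 = y0"
begin

lemma word_loop_image_free_mult:
  assumes v: "fst ` set v \<subseteq> pi1_carrier X x0" and w: "fst ` set w \<subseteq> pi1_carrier X x0"
  shows "loop_class Y y0 (p \<circ> word_loop x0 (free_mult v w))
    = pi1_mult Y y0 (loop_class Y y0 (p \<circ> word_loop x0 v)) (loop_class Y y0 (p \<circ> word_loop x0 w))"
proof -
  have pv: "p \<circ> word_loop x0 v \<in> loops Y y0" by (rule comp_in_loops[OF p p_base word_loop_in_loops[OF x0 v]])
  have pw: "p \<circ> word_loop x0 w \<in> loops Y y0" by (rule comp_in_loops[OF p p_base word_loop_in_loops[OF x0 w]])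
  have "fst ` set (v @ w) \<subseteq> pi1_carrier X x0" using v w by auto
  then have "loop_homotopic X x0 (word_loop x0 (free_reduce (v @ w))) (loop_concat (word_loop x0 v) (word_loop x0 w))"
    by (rule loop_homotopic_trans[OF word_loop_free_reduce[OF x0] word_loop_append[OF x0 v w]])
  then have "loop_homotopic Y y0 (p \<circ> word_loop x0 (free_mult v w))
      (loop_concat (p \<circ> word_loop x0 v) (p \<circ> word_loop x0 w))"
    unfolding free_mult_def comp_loop_concat[symmetric] by (rule loop_homotopic_comp[OF p p_base])
  also have "loop_homotopic Y y0 \<dots> (loop_concat (SOME f. f \<in> loop_class Y y0 (p \<circ> word_loop x0 v))
      (SOME g. g \<in> loop_class Y y0 (p \<circ> word_loop x0 w)))"
    by (rule loop_homotopic_concat[OF loop_homotopic_sym[OF loop_homotopic_some_class[OF pv]]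
          loop_homotopic_sym[OF loop_homotopic_some_class[OF pw]]])
  finally show ?thesis unfolding pi1_mult_def by (rule loop_class_eq)
qed

lemma word_loop_image_free_inv:
  assumes v: "fst ` set v \<subseteq> pi1_carrier X x0"
  shows "loop_class Y y0 (p \<circ> word_loop x0 (free_inv v)) = pi1_inv Y y0 (loop_class Y y0 (p \<circ> word_loop x0 v))"
proof -
  have pv: "p \<circ> word_loop x0 v \<in> loops Y y0" by (rule comp_in_loops[OF p p_base word_loop_in_loops[OF x0 v]])
  have "loop_homotopic Y y0 (p \<circ> word_loop x0 (free_inv v)) (loop_reverse (p \<circ> word_loop x0 v))"
    unfolding comp_loop_reverse[symmetric] by (rule loop_homotopic_comp[OF p p_base word_loop_free_inv[OF x0 v]])
  also have "loop_homotopic Y y0 \<dots> (loop_reverse (SOME f. f \<in> loop_class Y y0 (p \<circ> word_loop x0 v)))"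
    by (rule loop_homotopic_reverse[OF loop_homotopic_sym[OF loop_homotopic_some_class[OF pv]]])
  finally show ?thesis unfolding pi1_inv_def by (rule loop_class_eq)
qed

lemma word_loop_image_free_gen:
  assumes \<beta>: "\<beta> \<in> loops X x0"
  shows "loop_class Y y0 (p \<circ> word_loop x0 (free_gen (loop_class X x0 \<beta>))) = loop_class Y y0 (p \<circ> \<beta>)"
proof -
  let ?C = "loop_class X x0 \<beta>"
  have C: "?C \<in> pi1_carrier X x0" using \<beta> by (simp add: pi1_carrier_def)
  have "word_loop x0 (free_gen ?C) = loop_concat (class_rep ?C) (\<lambda>t. x0)"
    by (simp add: free_gen_def letter_loop_def)
  then have "loop_homotopic X x0 (word_loop x0 (free_gen ?C)) (class_rep ?C)"
    using loop_concat_const_right[OF pi1_carrier_class_rep(1)[OF C]] by simp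
  also have "loop_homotopic X x0 \<dots> \<beta>"
    by (rule loop_homotopic_sym[OF loop_class_eqD[OF \<beta> pi1_carrier_class_rep(2)[OF C]]])
  finally show ?thesis by (rule loop_class_eq[OF loop_homotopic_comp[OF p p_base]])
qed

lemma openin_pi1_qtop_free_gen_fibre:
  assumes loc: "\<And>\<alpha>. \<alpha> \<in> loops X x0 \<Longrightarrow>
      \<exists>N. openin (loop_space X x0) N \<and> \<alpha> \<in> N \<and> (\<forall>\<beta>\<in>N. loop_homotopic Y y0 (p \<circ> \<beta>) (p \<circ> \<alpha>))"
  shows "openin (pi1_qtop X x0) {C \<in> topspace (pi1_qtop X x0). loop_class Y y0 (p \<circ> word_loop x0 (free_gen C)) = c}"
proof -
  have loops: "topspace (loop_space X x0) \<subseteq> loops X x0" by (simp add: loop_space_def)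
  have eq: "{\<beta> \<in> topspace (loop_space X x0). loop_class X x0 \<beta> \<in>
        {C \<in> pi1_carrier X x0. loop_class Y y0 (p \<circ> word_loop x0 (free_gen C)) = c}}
      = {\<beta> \<in> topspace (loop_space X x0). loop_class Y y0 (p \<circ> \<beta>) = c}"
    using loops word_loop_image_free_gen by (auto simp: pi1_carrier_def)
  have "openin (loop_space X x0) {\<beta> \<in> topspace (loop_space X x0). loop_class Y y0 (p \<circ> \<beta>) = c}"
  proof (rule openin_locally_constant_fibre)
    fix \<alpha> assume "\<alpha> \<in> topspace (loop_space X x0)"
    then have "\<alpha> \<in> loops X x0" using loops by blast
    then obtain N where N: "openin (loop_space X x0) N" "\<alpha> \<in> N"
        "\<forall>\<beta>\<in>N. loop_homotopic Y y0 (p \<circ> \<beta>) (p \<circ> \<alpha>)"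
      using loc by blast
    moreover have "\<forall>\<beta>\<in>N. loop_class Y y0 (p \<circ> \<beta>) = loop_class Y y0 (p \<circ> \<alpha>)"
      using N(3) by (intro ballI loop_class_eq) blast
    ultimately show "\<exists>N. openin (loop_space X x0) N \<and> \<alpha> \<in> N \<and>
        (\<forall>\<beta>\<in>N. loop_class Y y0 (p \<circ> \<beta>) = loop_class Y y0 (p \<circ> \<alpha>))"
      by blast
  qed
  then show ?thesis
    unfolding topspace_pi1_qtop unfolding pi1_qtop_def openin_quotient_top eq by blast
qed

lemma openin_pi1_tau_fibre:
  assumes loc: "\<And>\<alpha>. \<alpha> \<in> loops X x0 \<Longrightarrow>
      \<exists>N. openin (loop_space X x0) N \<and> \<alpha> \<in> N \<and> (\<forall>\<beta>\<in>N. loop_homotopic Y y0 (p \<circ> \<beta>) (p \<circ> \<alpha>))"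
  shows "openin (pi1_tau X x0) {C \<in> pi1_carrier X x0. loop_class Y y0 (p \<circ> class_rep C) = c}"
proof -
  let ?wp = "word_product (pi1_mult X x0) (pi1_inv X x0) (pi1_one X x0)"
  let ?F = "free_group_carrier (pi1_carrier X x0)"
  have letters: "fst ` set w \<subseteq> pi1_carrier X x0" if "w \<in> ?F" for w
    using that by (simp add: free_group_carrier_def)
  have class_rep_wp: "loop_class Y y0 (p \<circ> class_rep (?wp w)) = loop_class Y y0 (p \<circ> word_loop x0 w)"
    if "w \<in> ?F" for w
  proof -
    have wl: "word_loop x0 w \<in> loops X x0" by (rule word_loop_in_loops[OF x0 letters[OF that]])
    have eq: "?wp w = loop_class X x0 (word_loop x0 w)" by (rule word_product_pi1[OF x0 letters[OF that]])
    have C: "?wp w \<in> pi1_carrier X x0" by (rule word_product_pi1_in_carrier[OF x0 that])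
    have "loop_homotopic X x0 (word_loop x0 w) (class_rep (?wp w))"
      by (rule loop_class_eqD[OF wl trans[OF eq[symmetric] pi1_carrier_class_rep(2)[OF C]]])
    then show ?thesis by (rule loop_class_eq[OF loop_homotopic_comp[OF p p_base], symmetric])
  qed
  have "openin (markov_top (pi1_qtop X x0))
      {w \<in> free_group_carrier (topspace (pi1_qtop X x0)). loop_class Y y0 (p \<circ> word_loop x0 w) = c}"
    by (rule openin_markov_top_fibre[where M = "pi1_mult Y y0" and I = "pi1_inv Y y0"])
      (simp_all add: topspace_pi1_qtop letters word_loop_image_free_mult word_loop_image_free_inv
        openin_pi1_qtop_free_gen_fibre[OF loc, unfolded topspace_pi1_qtop])
  then have "openin (markov_top (pi1_qtop X x0)) {w \<in> ?F. loop_class Y y0 (p \<circ> class_rep (?wp w)) = c}"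
    by (simp add: topspace_pi1_qtop class_rep_wp cong: conj_cong)
  then show ?thesis
    unfolding pi1_tau_def
    by (intro openin_tau_top_fibre[where G = "pi1_qtop X x0", unfolded topspace_pi1_qtop])
      (simp_all add: word_product_pi1_in_carrier[OF x0])
qed

end

lemma pi1_injective_separating_cover:
  assumes x0: "x0 \<in> topspace X" and inj: "pi1_injective X x0"
    and A: "A \<in> pi1_carrier X x0" and B: "B \<in> pi1_carrier X x0" and "A \<noteq> B"
  obtains U U0 \<phi> where "pointed_open_cover X x0 U U0" "partition_of_unity X U \<phi>"
    "loop_class (nerve_top U) (nerve_vertex U0) (canonical_map \<phi> \<circ> class_rep A)
       \<noteq> loop_class (nerve_top U) (nerve_vertex U0) (canonical_map \<phi> \<circ> class_rep B)"
proof -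
  have "\<not> loop_homotopic X x0 (class_rep A) (class_rep B)"
  proof
    assume "loop_homotopic X x0 (class_rep A) (class_rep B)"
    then have "loop_class X x0 (class_rep A) = loop_class X x0 (class_rep B)" by (rule loop_class_eq)
    with \<open>A \<noteq> B\<close> show False
      using pi1_carrier_class_rep(2)[OF A, symmetric] pi1_carrier_class_rep(2)[OF B, symmetric] by simp
  qed
  then obtain U U0 \<phi> where cover: "pointed_open_cover X x0 U U0" and pou: "partition_of_unity X U \<phi>"
    and image_not_homotopic: "\<not> loop_homotopic (nerve_top U) (nerve_vertex U0)
           (canonical_map \<phi> \<circ> class_rep A) (canonical_map \<phi> \<circ> class_rep B)"
    using inj pi1_carrier_class_rep(1)[OF A] pi1_carrier_class_rep(1)[OF B]
    unfolding pi1_injective_def by blast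
  have image_A: "canonical_map \<phi> \<circ> class_rep A \<in> loops (nerve_top U) (nerve_vertex U0)"
    by (rule comp_in_loops[OF continuous_map_canonical_map[OF pou] canonical_map_base[OF x0 cover pou]
          pi1_carrier_class_rep(1)[OF A]])
  have "loop_class (nerve_top U) (nerve_vertex U0) (canonical_map \<phi> \<circ> class_rep A)
      \<noteq> loop_class (nerve_top U) (nerve_vertex U0) (canonical_map \<phi> \<circ> class_rep B)"
    using image_not_homotopic loop_class_eqD[OF image_A] by blast
  then show thesis by (rule that[OF cover pou])
qed

theorem proposition3p24:
  fixes X :: "'a topology" and x0 :: 'a
  assumes "x0 \<in> topspace X"
    and "pi1_injective X x0"
  shows "Hausdorff_space (pi1_tau X x0)"
proof (rule Hausdorff_space_separating_fibres[where 'b = "(real \<Rightarrow> 'a set \<Rightarrow> real) set"])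
  fix A B assume "A \<in> topspace (pi1_tau X x0)" "B \<in> topspace (pi1_tau X x0)" "A \<noteq> B"
  then obtain U U0 \<phi> where cover: "pointed_open_cover X x0 U U0" and pou: "partition_of_unity X U \<phi>"
    and neq: "loop_class (nerve_top U) (nerve_vertex U0) (canonical_map \<phi> \<circ> class_rep A)
       \<noteq> loop_class (nerve_top U) (nerve_vertex U0) (canonical_map \<phi> \<circ> class_rep B)"
    unfolding topspace_pi1_tau[OF assms(1)] by (rule pi1_injective_separating_cover[OF assms])
  let ?f = "\<lambda>C. loop_class (nerve_top U) (nerve_vertex U0) (canonical_map \<phi> \<circ> class_rep C)"
  have fibres: "openin (pi1_tau X x0) {C \<in> topspace (pi1_tau X x0). ?f C = c}" for c
    unfolding topspace_pi1_tau[OF assms(1)]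
    by (rule openin_pi1_tau_fibre[OF assms(1) continuous_map_canonical_map[OF pou]
          canonical_map_base[OF assms(1) cover pou] canonical_map_loop_locally_homotopic[OF assms(1) cover pou]])
  show "\<exists>f :: _ \<Rightarrow> (real \<Rightarrow> 'a set \<Rightarrow> real) set.
      f A \<noteq> f B \<and> (\<forall>c. openin (pi1_tau X x0) {C \<in> topspace (pi1_tau X x0). f C = c})"
    by (intro exI[where x = ?f] conjI allI neq fibres)
qed

end
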